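(* The existential-completion 2-monad $T^{ex}$ on $\mathbf{SD}^{exp}$ induces (by restriction) a 2-monad $\widetilde{T^{ex}}$ on $\mathbf{UD}^{exp}$; that is, for every object $P$ of $\mathbf{UD}^{exp}$, $T^{ex}(P)=P^{ex}$ is in $\mathbf{UD}^{exp}$, $T^{ex}$ sends 1-cells of $\mathbf{UD}^{exp}$ to 1-cells of $\mathbf{UD}^{exp}$, and the components at objects of $\mathbf{UD}^{exp}$ of the unit and multiplication of $T^{ex}$ are 1-cells of $\mathbf{UD}^{exp}$.
   Context: A slat-doctrine is a functor $P:\mathcal{C}^{\mathrm{op}}\to\mathbf{Pos}$ with $\mathcal{C}$ having finite products; $P_f$ is reindexing along $f$. It is existential (resp. universal) if reindexing along each product projection has a left (resp. right) adjoint satisfying Beck–Chevalley (for every pullback of a projection $\mathrm{pr}:X\to A$ along $f:A'\to A$, with resulting projection $\mathrm{pr}'$ and $f':X'\to X$, $\exists_{\mathrm{pr}'}P_{f'}=P_f\exists_{\mathrm{pr}}$, resp. $\forall_{\mathrm{pr}'}P_{f'}=P_f\forall_{\mathrm{pr}}$). The 2-category $\mathbf{SD}$: objects slat-doctrines; 1-cells $(F,b):P\to R$ with $F$ a functor between base categories and $b:P\to R\circ F^{\mathrm{op}}$ a natural transformation; 2-cells $\theta:(F,b)\Rightarrow(G,c)$ natural transformations $F\to G$ with $b_A(\alpha)\le R_{\theta_A}(c_A(\alpha))$. $\mathbf{SD}^{exp}$ is the 2-full sub-2-category of slat-doctrines whose base category has exponents, with 1-cells whose functor preserves exponents; $\mathbf{UD}^{exp}$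 is its sub-2-category of universal slat-doctrines and 1-cells preserving the universal structure (commuting with right adjoints along projections). Existential completion: $P^{ex}(A)$ is the poset (reflection) of triples $(A,B,\alpha)$, $\alpha\in P(A\times B)$, with $(A,B,\alpha)\le(A,C,\beta)$ iff some $f:A\times B\to C$ has $\alpha\le P_{\langle\mathrm{pr}_A,f\rangle}(\beta)$, and $P^{ex}_f(C,D,\gamma)=(A,D,P_{f\times 1_D}(\gamma))$. $P\mapsto P^{ex}$ extends to a 2-functor left 2-adjoint to the forgetful 2-functor from existential slat-doctrines to $\mathbf{SD}$; $T^{ex}$ denotes the induced 2-monad (considered on $\mathbf{SD}^{exp}$), with unit component $P(A)\to P^{ex}(A)$, $\alpha\mapsto(A,1,P_{\mathrm{pr}_A}\alpha)$, and multiplication component $(P^{ex})^{ex}(A)\to P^{ex}(A)$, $(A,B,x)\mapsto\exists^{ex}_{\mathrm{pr}_A}(x)$ for $x\in P^{ex}(A\times B)$. *)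

theory Defs
  imports Main
begin

record ('o,'a) ccat =
  Ob  :: "'o set"
  Ar  :: "'a set"
  Dm  :: "'a \<Rightarrow> 'o"
  Cd  :: "'a \<Rightarrow> 'o"
  Idt :: "'o \<Rightarrow> 'a"
  Cmp :: "'a \<Rightarrow> 'a \<Rightarrow> 'a"   (* Cmp C g f = g o f *)
  Trm :: "'o"
  Prd :: "'o \<Rightarrow> 'o \<Rightarrow> 'o"
  Pr1 :: "'o \<Rightarrow> 'o \<Rightarrow> 'a"
  Pr2 :: "'o \<Rightarrow> 'o \<Rightarrow> 'a"

definition hom :: "('o,'a,'z) ccat_scheme \<Rightarrow> 'o \<Rightarrow> 'o \<Rightarrow> 'a set" where
  "hom C X Y = {f \<in> Ar C. Dm C f = X \<and> Cd C f = Y}"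

definition category :: "('o,'a,'z) ccat_scheme \<Rightarrow> bool" where
  "category C \<longleftrightarrow>
     (\<forall>f\<in>Ar C. Dm C f \<in> Ob C \<and> Cd C f \<in> Ob C) \<and>
     (\<forall>X\<in>Ob C. Idt C X \<in> hom C X X) \<and>
     (\<forall>X Y Z f g. f \<in> hom C X Y \<longrightarrow> g \<in> hom C Y Z \<longrightarrow> Cmp C g f \<in> hom C X Z) \<and>
     (\<forall>X Y f. f \<in> hom C X Y \<longrightarrow> Cmp C f (Idt C X) = f \<and> Cmp C (Idt C Y) f = f) \<and>
     (\<forall>W X Y Z f g h. f \<in> hom C W X \<longrightarrow> g \<in> hom C X Y \<longrightarrow> h \<in> hom C Y Z \<longrightarrow>
        Cmp C h (Cmp C g f) = Cmp C (Cmp C h g) f)"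

definition fin_products :: "('o,'a,'z) ccat_scheme \<Rightarrow> bool" where
  "fin_products C \<longleftrightarrow>
     Trm C \<in> Ob C \<and> (\<forall>X\<in>Ob C. \<exists>!h. h \<in> hom C X (Trm C)) \<and>
     (\<forall>A\<in>Ob C. \<forall>B\<in>Ob C.
        Prd C A B \<in> Ob C \<and> Pr1 C A B \<in> hom C (Prd C A B) A \<and> Pr2 C A B \<in> hom C (Prd C A B) B \<and>
        (\<forall>X f g. f \<in> hom C X A \<longrightarrow> g \<in> hom C X B \<longrightarrow>
           (\<exists>!h. h \<in> hom C X (Prd C A B) \<and> Cmp C (Pr1 C A B) h = f \<and> Cmp C (Pr2 C A B) h = g)))"

definition pair :: "('o,'a,'z) ccat_scheme \<Rightarrow> 'a \<Rightarrow> 'a \<Rightarrow> 'a" where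
  "pair C f g = (THE h. h \<in> hom C (Dm C f) (Prd C (Cd C f) (Cd C g)) \<and>
      Cmp C (Pr1 C (Cd C f) (Cd C g)) h = f \<and> Cmp C (Pr2 C (Cd C f) (Cd C g)) h = g)"

definition times :: "('o,'a,'z) ccat_scheme \<Rightarrow> 'a \<Rightarrow> 'a \<Rightarrow> 'a" where
  "times C f g = pair C (Cmp C f (Pr1 C (Dm C f) (Dm C g))) (Cmp C g (Pr2 C (Dm C f) (Dm C g)))"

definition is_exponential :: "('o,'a,'z) ccat_scheme \<Rightarrow> 'o \<Rightarrow> 'o \<Rightarrow> 'o \<Rightarrow> 'a \<Rightarrow> bool" where
  "is_exponential C B D E ev \<longleftrightarrow>
     E \<in> Ob C \<and> ev \<in> hom C (Prd C E B) D \<and>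
     (\<forall>A\<in>Ob C. \<forall>f\<in>hom C (Prd C A B) D.
        \<exists>!g. g \<in> hom C A E \<and> Cmp C ev (times C g (Idt C B)) = f)"

definition has_exponents :: "('o,'a,'z) ccat_scheme \<Rightarrow> bool" where
  "has_exponents C \<longleftrightarrow> (\<forall>B\<in>Ob C. \<forall>D\<in>Ob C. \<exists>E ev. is_exponential C B D E ev)"

definition iso_ar :: "('o,'a,'z) ccat_scheme \<Rightarrow> 'a \<Rightarrow> bool" where
  "iso_ar C f \<longleftrightarrow> f \<in> Ar C \<and> (\<exists>g\<in>hom C (Cd C f) (Dm C f).
      Cmp C g f = Idt C (Dm C f) \<and> Cmp C f g = Idt C (Cd C f))"

definition inv_ar :: "('o,'a,'z) ccat_scheme \<Rightarrow> 'a \<Rightarrow> 'a" where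
  "inv_ar C f = (THE g. g \<in> hom C (Cd C f) (Dm C f) \<and>
      Cmp C g f = Idt C (Dm C f) \<and> Cmp C f g = Idt C (Cd C f))"

definition is_functor :: "('o,'a,'z) ccat_scheme \<Rightarrow> ('o2,'a2,'z2) ccat_scheme \<Rightarrow>
    ('o \<Rightarrow> 'o2) \<Rightarrow> ('a \<Rightarrow> 'a2) \<Rightarrow> bool" where
  "is_functor C D Fo Fa \<longleftrightarrow>
     (\<forall>X\<in>Ob C. Fo X \<in> Ob D) \<and>
     (\<forall>f\<in>Ar C. Fa f \<in> hom D (Fo (Dm C f)) (Fo (Cd C f))) \<and>
     (\<forall>X\<in>Ob C. Fa (Idt C X) = Idt D (Fo X)) \<and>
     (\<forall>X Y Z f g. f \<in> hom C X Y \<longrightarrow> g \<in> hom C Y Z \<longrightarrow> Fa (Cmp C g f) = Cmp D (Fa g) (Fa f))"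

definition cmpr :: "('o,'a,'z) ccat_scheme \<Rightarrow> ('o2,'a2,'z2) ccat_scheme \<Rightarrow>
    ('o \<Rightarrow> 'o2) \<Rightarrow> ('a \<Rightarrow> 'a2) \<Rightarrow> 'o \<Rightarrow> 'o \<Rightarrow> 'a2" where
  "cmpr C D Fo Fa A B = pair D (Fa (Pr1 C A B)) (Fa (Pr2 C A B))"

definition preserves_products :: "('o,'a,'z) ccat_scheme \<Rightarrow> ('o2,'a2,'z2) ccat_scheme \<Rightarrow>
    ('o \<Rightarrow> 'o2) \<Rightarrow> ('a \<Rightarrow> 'a2) \<Rightarrow> bool" where
  "preserves_products C D Fo Fa \<longleftrightarrow>
     (\<forall>Y\<in>Ob D. \<exists>!h. h \<in> hom D Y (Fo (Trm C))) \<and>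
     (\<forall>A\<in>Ob C. \<forall>B\<in>Ob C. iso_ar D (cmpr C D Fo Fa A B))"

definition preserves_exponents :: "('o,'a,'z) ccat_scheme \<Rightarrow> ('o2,'a2,'z2) ccat_scheme \<Rightarrow>
    ('o \<Rightarrow> 'o2) \<Rightarrow> ('a \<Rightarrow> 'a2) \<Rightarrow> bool" where
  "preserves_exponents C D Fo Fa \<longleftrightarrow>
     (\<forall>B E' E ev. B \<in> Ob C \<longrightarrow> E' \<in> Ob C \<longrightarrow> is_exponential C B E' E ev \<longrightarrow>
        is_exponential D (Fo B) (Fo E') (Fo E) (Cmp D (Fa ev) (inv_ar D (cmpr C D Fo Fa E B))))"

text \<open>\<open>Car P A\<close> is the poset \<open>P(A)\<close> with order \<open>Leq P A\<close>; \<open>Rdx P f\<close> is \<open>P_f\<close>.\<close>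
record ('a,'o,'e) pdoc =
  Car :: "'o \<Rightarrow> 'e set"
  Leq :: "'o \<Rightarrow> 'e \<Rightarrow> 'e \<Rightarrow> bool"
  Rdx :: "'a \<Rightarrow> 'e \<Rightarrow> 'e"

definition doctrine :: "('o,'a,'z) ccat_scheme \<Rightarrow> ('a,'o,'e) pdoc \<Rightarrow> bool" where
  "doctrine C P \<longleftrightarrow>
     (\<forall>X\<in>Ob C. (\<forall>x\<in>Car P X. Leq P X x x) \<and>
        (\<forall>x\<in>Car P X. \<forall>y\<in>Car P X. \<forall>z\<in>Car P X. Leq P X x y \<longrightarrow> Leq P X y z \<longrightarrow> Leq P X x z) \<and>
        (\<forall>x\<in>Car P X. \<forall>y\<in>Car P X. Leq P X x y \<longrightarrow> Leq P X y x \<longrightarrow> x = y)) \<and>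
     (\<forall>f\<in>Ar C. \<forall>x\<in>Car P (Cd C f). Rdx P f x \<in> Car P (Dm C f)) \<and>
     (\<forall>f\<in>Ar C. \<forall>x\<in>Car P (Cd C f). \<forall>y\<in>Car P (Cd C f).
        Leq P (Cd C f) x y \<longrightarrow> Leq P (Dm C f) (Rdx P f x) (Rdx P f y)) \<and>
     (\<forall>X\<in>Ob C. \<forall>x\<in>Car P X. Rdx P (Idt C X) x = x) \<and>
     (\<forall>X Y Z f g. f \<in> hom C X Y \<longrightarrow> g \<in> hom C Y Z \<longrightarrow>
        (\<forall>x\<in>Car P Z. Rdx P (Cmp C g f) x = Rdx P f (Rdx P g x)))"

definition is_forall :: "('o,'a,'z) ccat_scheme \<Rightarrow> ('a,'o,'e) pdoc \<Rightarrow> 'o \<Rightarrow> 'o \<Rightarrow> ('e \<Rightarrow> 'e) \<Rightarrow> bool" where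
  "is_forall C P A B u \<longleftrightarrow>
     (\<forall>y\<in>Car P (Prd C A B). u y \<in> Car P A) \<and>
     (\<forall>x\<in>Car P A. \<forall>y\<in>Car P (Prd C A B).
        Leq P (Prd C A B) (Rdx P (Pr1 C A B) x) y \<longleftrightarrow> Leq P A x (u y))"

text \<open>\<open>z\<close> is the value at \<open>y\<close> of a left adjoint to \<open>P_{pr_A}\<close>.\<close>
definition is_exists_val :: "('o,'a,'z) ccat_scheme \<Rightarrow> ('a,'o,'e) pdoc \<Rightarrow> 'o \<Rightarrow> 'o \<Rightarrow> 'e \<Rightarrow> 'e \<Rightarrow> bool" where
  "is_exists_val C P A B y z \<longleftrightarrow>
     z \<in> Car P A \<and>
     (\<forall>w\<in>Car P A. Leq P A z w \<longleftrightarrow> Leq P (Prd C A B) y (Rdx P (Pr1 C A B) w))"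

definition universal :: "('o,'a,'z) ccat_scheme \<Rightarrow> ('a,'o,'e) pdoc \<Rightarrow> bool" where
  "universal C P \<longleftrightarrow> doctrine C P \<and>
     (\<exists>u. (\<forall>A\<in>Ob C. \<forall>B\<in>Ob C. is_forall C P A B (u A B)) \<and>
          (\<forall>A A' B f. f \<in> hom C A' A \<longrightarrow> B \<in> Ob C \<longrightarrow>
             (\<forall>y\<in>Car P (Prd C A B).
                Rdx P f (u A B y) = u A' B (Rdx P (times C f (Idt C B)) y))))"

definition SDexp_obj :: "('o,'a,'z) ccat_scheme \<Rightarrow> ('a,'o,'e) pdoc \<Rightarrow> bool" where
  "SDexp_obj C P \<longleftrightarrow> category C \<and> fin_products C \<and> has_exponents C \<and> doctrine C P"

definition UDexp_obj :: "('o,'a,'z) ccat_scheme \<Rightarrow> ('a,'o,'e) pdoc \<Rightarrow> bool" where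
  "UDexp_obj C P \<longleftrightarrow> SDexp_obj C P \<and> universal C P"

definition SD_1cell :: "('o,'a,'z) ccat_scheme \<Rightarrow> ('a,'o,'e) pdoc \<Rightarrow>
    ('o2,'a2,'z2) ccat_scheme \<Rightarrow> ('a2,'o2,'e2) pdoc \<Rightarrow>
    ('o \<Rightarrow> 'o2) \<Rightarrow> ('a \<Rightarrow> 'a2) \<Rightarrow> ('o \<Rightarrow> 'e \<Rightarrow> 'e2) \<Rightarrow> bool" where
  "SD_1cell C P D R Fo Fa b \<longleftrightarrow>
     is_functor C D Fo Fa \<and> preserves_products C D Fo Fa \<and>
     (\<forall>A\<in>Ob C. \<forall>x\<in>Car P A. b A x \<in> Car R (Fo A)) \<and>
     (\<forall>A\<in>Ob C. \<forall>x\<in>Car P A. \<forall>y\<in>Car P A. Leq P A x y \<longrightarrow> Leq R (Fo A) (b A x) (b A y)) \<and>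
     (\<forall>f\<in>Ar C. \<forall>x\<in>Car P (Cd C f). b (Dm C f) (Rdx P f x) = Rdx R (Fa f) (b (Cd C f) x))"

definition SDexp_1cell :: "('o,'a,'z) ccat_scheme \<Rightarrow> ('a,'o,'e) pdoc \<Rightarrow>
    ('o2,'a2,'z2) ccat_scheme \<Rightarrow> ('a2,'o2,'e2) pdoc \<Rightarrow>
    ('o \<Rightarrow> 'o2) \<Rightarrow> ('a \<Rightarrow> 'a2) \<Rightarrow> ('o \<Rightarrow> 'e \<Rightarrow> 'e2) \<Rightarrow> bool" where
  "SDexp_1cell C P D R Fo Fa b \<longleftrightarrow> SD_1cell C P D R Fo Fa b \<and> preserves_exponents C D Fo Fa"

text \<open>Commuting with the right adjoints along projections
  (modulo the canonical iso \<open>FA\<times>FB \<cong> F(A\<times>B)\<close>).\<close>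
definition preserves_forall :: "('o,'a,'z) ccat_scheme \<Rightarrow> ('a,'o,'e) pdoc \<Rightarrow>
    ('o2,'a2,'z2) ccat_scheme \<Rightarrow> ('a2,'o2,'e2) pdoc \<Rightarrow>
    ('o \<Rightarrow> 'o2) \<Rightarrow> ('a \<Rightarrow> 'a2) \<Rightarrow> ('o \<Rightarrow> 'e \<Rightarrow> 'e2) \<Rightarrow> bool" where
  "preserves_forall C P D R Fo Fa b \<longleftrightarrow>
     (\<forall>uP uR. (\<forall>A\<in>Ob C. \<forall>B\<in>Ob C. is_forall C P A B (uP A B)) \<longrightarrow>
              (\<forall>A\<in>Ob D. \<forall>B\<in>Ob D. is_forall D R A B (uR A B)) \<longrightarrow>
        (\<forall>A\<in>Ob C. \<forall>B\<in>Ob C. \<forall>y\<in>Car P (Prd C A B).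
           b A (uP A B y) =
           uR (Fo A) (Fo B) (Rdx R (inv_ar D (cmpr C D Fo Fa A B)) (b (Prd C A B) y))))"

definition UDexp_1cell :: "('o,'a,'z) ccat_scheme \<Rightarrow> ('a,'o,'e) pdoc \<Rightarrow>
    ('o2,'a2,'z2) ccat_scheme \<Rightarrow> ('a2,'o2,'e2) pdoc \<Rightarrow>
    ('o \<Rightarrow> 'o2) \<Rightarrow> ('a \<Rightarrow> 'a2) \<Rightarrow> ('o \<Rightarrow> 'e \<Rightarrow> 'e2) \<Rightarrow> bool" where
  "UDexp_1cell C P D R Fo Fa b \<longleftrightarrow>
     SDexp_1cell C P D R Fo Fa b \<and> preserves_forall C P D R Fo Fa b"

text \<open>Preorder on pairs \<open>(B,\<alpha>)\<close>, \<open>\<alpha> \<in> P(A\<times>B)\<close> (standing for triples \<open>(A,B,\<alpha>)\<close>).\<close>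
definition exle :: "('o,'a,'z) ccat_scheme \<Rightarrow> ('a,'o,'e) pdoc \<Rightarrow> 'o \<Rightarrow> 'o \<times> 'e \<Rightarrow> 'o \<times> 'e \<Rightarrow> bool" where
  "exle C P A p q \<longleftrightarrow>
     (\<exists>f\<in>hom C (Prd C A (fst p)) (fst q).
        Leq P (Prd C A (fst p)) (snd p) (Rdx P (pair C (Pr1 C A (fst p)) f) (snd q)))"

text \<open>Equivalence class of \<open>(A,B,\<alpha>)\<close> in the poset reflection.\<close>
definition ex_cls :: "('o,'a,'z) ccat_scheme \<Rightarrow> ('a,'o,'e) pdoc \<Rightarrow> 'o \<Rightarrow> 'o \<Rightarrow> 'e \<Rightarrow> ('o \<times> 'e) set" where
  "ex_cls C P A B \<alpha> = {q. fst q \<in> Ob C \<and> snd q \<in> Car P (Prd C A (fst q)) \<and>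
      exle C P A (B,\<alpha>) q \<and> exle C P A q (B,\<alpha>)}"

definition Pex :: "('o,'a,'z) ccat_scheme \<Rightarrow> ('a,'o,'e) pdoc \<Rightarrow> ('a,'o,('o \<times> 'e) set) pdoc" where
  "Pex C P = \<lparr> Car = (\<lambda>A. {ex_cls C P A B \<alpha> | B \<alpha>. B \<in> Ob C \<and> \<alpha> \<in> Car P (Prd C A B)}),
               Leq = (\<lambda>A s t. \<exists>p\<in>s. \<exists>q\<in>t. exle C P A p q),
               Rdx = (\<lambda>f s. \<Union>p\<in>s. ex_cls C P (Dm C f) (fst p)
                                 (Rdx P (times C f (Idt C (fst p))) (snd p))) \<rparr>"

text \<open>Action of \<open>T^ex\<close> on the natural-transformation part of a 1-cell \<open>(F,b)\<close>.\<close>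
definition bex :: "('o,'a,'z) ccat_scheme \<Rightarrow> ('a,'o,'e) pdoc \<Rightarrow>
    ('o2,'a2,'z2) ccat_scheme \<Rightarrow> ('a2,'o2,'e2) pdoc \<Rightarrow>
    ('o \<Rightarrow> 'o2) \<Rightarrow> ('a \<Rightarrow> 'a2) \<Rightarrow> ('o \<Rightarrow> 'e \<Rightarrow> 'e2) \<Rightarrow> 'o \<Rightarrow> ('o \<times> 'e) set \<Rightarrow> ('o2 \<times> 'e2) set" where
  "bex C P D R Fo Fa b A s = (\<Union>p\<in>s. ex_cls D R (Fo A) (Fo (fst p))
      (Rdx R (inv_ar D (cmpr C D Fo Fa A (fst p))) (b (Prd C A (fst p)) (snd p))))"

text \<open>Unit component \<open>\<alpha> \<mapsto> (A,1,P_{pr_A}\<alpha>)\<close> (with identity base functor).\<close>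
definition eta :: "('o,'a,'z) ccat_scheme \<Rightarrow> ('a,'o,'e) pdoc \<Rightarrow> 'o \<Rightarrow> 'e \<Rightarrow> ('o \<times> 'e) set" where
  "eta C P A \<alpha> = ex_cls C P A (Trm C) (Rdx P (Pr1 C A (Trm C)) \<alpha>)"

text \<open>Multiplication component \<open>(A,B,x) \<mapsto> \<exists>^ex_{pr_A}(x)\<close> (with identity base functor).\<close>
definition mu :: "('o,'a,'z) ccat_scheme \<Rightarrow> ('a,'o,'e) pdoc \<Rightarrow> 'o \<Rightarrow>
    ('o \<times> ('o \<times> 'e) set) set \<Rightarrow> ('o \<times> 'e) set" where
  "mu C P A s = (THE z. \<exists>p\<in>s. is_exists_val C (Pex C P) A (fst p) (snd p) z)"

end

theory Submission
  imports Defs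
begin

text \<open>
  An element of \<open>P\<^sup>e\<^sup>x(A)\<close> is the class of a pair \<open>(B, \<alpha>)\<close> with \<open>\<alpha> \<in> P(A \<times> B)\<close>, read as
  \<open>\<exists>b:B. \<alpha>(a, b)\<close>; reindexing, the order, the unit and the multiplication act on representatives.
  The substance of the theorem is the universal quantifier of \<open>P\<^sup>e\<^sup>x\<close>, which is given by
  Skolemisation: if \<open>ev : E \<times> B \<rightarrow> C'\<close> exhibits \<open>E\<close> as an exponential, then in \<open>P\<^sup>e\<^sup>x(A)\<close>
  \<open>\<forall>b:B. \<exists>c:C'. \<gamma>(a, b, c) = \<exists>e:E. \<forall>b:B. \<gamma>(a, b, ev(e, b))\<close>,
  since currying turns a witnessing map for one side into a witnessing map for the other.  The right-hand side is stable under reindexing, so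
  \<open>P\<^sup>e\<^sup>x\<close> is universal.  Finally \<open>\<eta>\<close>, \<open>\<mu>\<close> and \<open>T\<^sup>e\<^sup>x(F, b)\<close> commute with \<open>\<forall>\<close> because
  they respect Skolemisation: for \<open>\<eta>\<close> the terminal object is its own exponential, for \<open>\<mu>\<close>
  the product \<open>E \<times> G\<close> of exponentials of \<open>C'\<close> and \<open>C''\<close> is an exponential of \<open>C' \<times> C''\<close>, and
  for \<open>T\<^sup>e\<^sup>x(F, b)\<close> the functor \<open>F\<close> preserves exponentials and \<open>b\<close> preserves \<open>\<forall>\<close>.
\<close>

section \<open>Cartesian categories\<close>

definition weak_exponential :: "('o,'a,'z) ccat_scheme \<Rightarrow> 'o \<Rightarrow> 'o \<Rightarrow> 'o \<Rightarrow> 'a \<Rightarrow> bool" where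
  "weak_exponential C B D E ev \<longleftrightarrow>
     E \<in> Ob C \<and> ev \<in> hom C (Prd C E B) D \<and>
     (\<forall>A\<in>Ob C. \<forall>h\<in>hom C (Prd C A B) D. \<exists>g\<in>hom C A E. Cmp C ev (times C g (Idt C B)) = h)"

locale cartesian_category =
  fixes C :: "('o,'a,'z) ccat_scheme"
  assumes category: "category C" and fin_products: "fin_products C"
begin

lemma hom_iff: "f \<in> hom C X Y \<longleftrightarrow> f \<in> Ar C \<and> Dm C f = X \<and> Cd C f = Y"
  by (simp add: hom_def)

lemma Dm_Ob[simp]: "f \<in> Ar C \<Longrightarrow> Dm C f \<in> Ob C"
  using category by (simp add: category_def)
lemma Cd_Ob[simp]: "f \<in> Ar C \<Longrightarrow> Cd C f \<in> Ob C"
  using category by (simp add: category_def)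
lemma Idt_hom: "X \<in> Ob C \<Longrightarrow> Idt C X \<in> hom C X X"
  using category by (simp add: category_def)
lemma Idt_Ar[simp]: "X \<in> Ob C \<Longrightarrow> Idt C X \<in> Ar C"
  using Idt_hom by (simp add: hom_iff)
lemma Dm_Idt[simp]: "X \<in> Ob C \<Longrightarrow> Dm C (Idt C X) = X"
  using Idt_hom by (simp add: hom_iff)
lemma Cd_Idt[simp]: "X \<in> Ob C \<Longrightarrow> Cd C (Idt C X) = X"
  using Idt_hom by (simp add: hom_iff)
lemma Cmp_hom: "f \<in> Ar C \<Longrightarrow> g \<in> Ar C \<Longrightarrow> Cd C f = Dm C g \<Longrightarrow>
    Cmp C g f \<in> hom C (Dm C f) (Cd C g)"
  using category unfolding category_def hom_iff by metis
lemma Cmp_Ar[simp]: "f \<in> Ar C \<Longrightarrow> g \<in> Ar C \<Longrightarrow> Cd C f = Dm C g \<Longrightarrow> Cmp C g f \<in> Ar C"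
  using Cmp_hom by (simp add: hom_iff)
lemma Dm_Cmp[simp]: "f \<in> Ar C \<Longrightarrow> g \<in> Ar C \<Longrightarrow> Cd C f = Dm C g \<Longrightarrow> Dm C (Cmp C g f) = Dm C f"
  using Cmp_hom by (simp add: hom_iff)
lemma Cd_Cmp[simp]: "f \<in> Ar C \<Longrightarrow> g \<in> Ar C \<Longrightarrow> Cd C f = Dm C g \<Longrightarrow> Cd C (Cmp C g f) = Cd C g"
  using Cmp_hom by (simp add: hom_iff)
lemma Cmp_Idt_right[simp]: "f \<in> Ar C \<Longrightarrow> X = Dm C f \<Longrightarrow> Cmp C f (Idt C X) = f"
  using category unfolding category_def hom_iff by metis
lemma Cmp_Idt_left[simp]: "f \<in> Ar C \<Longrightarrow> Y = Cd C f \<Longrightarrow> Cmp C (Idt C Y) f = f"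
  using category unfolding category_def hom_iff by metis

lemma Cmp_assoc[simp]:
  assumes "f \<in> Ar C" "g \<in> Ar C" "h \<in> Ar C" "Cd C f = Dm C g" "Cd C g = Dm C h"
  shows "Cmp C (Cmp C h g) f = Cmp C h (Cmp C g f)"
proof -
  have "f \<in> hom C (Dm C f) (Dm C g)" "g \<in> hom C (Dm C g) (Dm C h)" "h \<in> hom C (Dm C h) (Cd C h)"
    using assms by (auto simp: hom_iff)
  then show ?thesis using category unfolding category_def by metis
qed

lemma Cmp_Cmp_eq:
  "Cmp C g f = h \<Longrightarrow> f \<in> Ar C \<Longrightarrow> g \<in> Ar C \<Longrightarrow> x \<in> Ar C \<Longrightarrow> Cd C f = Dm C g \<Longrightarrow>
    Cd C x = Dm C f \<Longrightarrow> Cmp C g (Cmp C f x) = Cmp C h x"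
  by (subst Cmp_assoc[symmetric]) auto

lemma Trm_Ob[simp]: "Trm C \<in> Ob C"
  using fin_products by (simp add: fin_products_def)
lemma Prd_Ob[simp]: "A \<in> Ob C \<Longrightarrow> B \<in> Ob C \<Longrightarrow> Prd C A B \<in> Ob C"
  using fin_products by (simp add: fin_products_def)
lemma Pr1_hom: "A \<in> Ob C \<Longrightarrow> B \<in> Ob C \<Longrightarrow> Pr1 C A B \<in> hom C (Prd C A B) A"
  using fin_products by (simp add: fin_products_def)
lemma Pr2_hom: "A \<in> Ob C \<Longrightarrow> B \<in> Ob C \<Longrightarrow> Pr2 C A B \<in> hom C (Prd C A B) B"
  using fin_products by (simp add: fin_products_def)
lemma Pr1_Ar[simp]: "A \<in> Ob C \<Longrightarrow> B \<in> Ob C \<Longrightarrow> Pr1 C A B \<in> Ar C"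
  using Pr1_hom by (simp add: hom_iff)
lemma Dm_Pr1[simp]: "A \<in> Ob C \<Longrightarrow> B \<in> Ob C \<Longrightarrow> Dm C (Pr1 C A B) = Prd C A B"
  using Pr1_hom by (simp add: hom_iff)
lemma Cd_Pr1[simp]: "A \<in> Ob C \<Longrightarrow> B \<in> Ob C \<Longrightarrow> Cd C (Pr1 C A B) = A"
  using Pr1_hom by (simp add: hom_iff)
lemma Pr2_Ar[simp]: "A \<in> Ob C \<Longrightarrow> B \<in> Ob C \<Longrightarrow> Pr2 C A B \<in> Ar C"
  using Pr2_hom by (simp add: hom_iff)
lemma Dm_Pr2[simp]: "A \<in> Ob C \<Longrightarrow> B \<in> Ob C \<Longrightarrow> Dm C (Pr2 C A B) = Prd C A B"
  using Pr2_hom by (simp add: hom_iff)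
lemma Cd_Pr2[simp]: "A \<in> Ob C \<Longrightarrow> B \<in> Ob C \<Longrightarrow> Cd C (Pr2 C A B) = B"
  using Pr2_hom by (simp add: hom_iff)

lemma pair_ex1:
  "A \<in> Ob C \<Longrightarrow> B \<in> Ob C \<Longrightarrow> f \<in> hom C X A \<Longrightarrow> g \<in> hom C X B \<Longrightarrow>
    \<exists>!h. h \<in> hom C X (Prd C A B) \<and> Cmp C (Pr1 C A B) h = f \<and> Cmp C (Pr2 C A B) h = g"
  using fin_products unfolding fin_products_def by blast

lemma pair_spec:
  assumes "f \<in> Ar C" "g \<in> Ar C" "Dm C f = Dm C g"
  shows "pair C f g \<in> hom C (Dm C f) (Prd C (Cd C f) (Cd C g)) \<and>
    Cmp C (Pr1 C (Cd C f) (Cd C g)) (pair C f g) = f \<and> Cmp C (Pr2 C (Cd C f) (Cd C g)) (pair C f g) = g"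
proof -
  have "\<exists>!h. h \<in> hom C (Dm C f) (Prd C (Cd C f) (Cd C g)) \<and> Cmp C (Pr1 C (Cd C f) (Cd C g)) h = f
     \<and> Cmp C (Pr2 C (Cd C f) (Cd C g)) h = g"
    using assms by (intro pair_ex1) (auto simp: hom_iff)
  then show ?thesis unfolding pair_def by (rule theI')
qed

lemma pair_Ar[simp]: "f \<in> Ar C \<Longrightarrow> g \<in> Ar C \<Longrightarrow> Dm C f = Dm C g \<Longrightarrow> pair C f g \<in> Ar C"
  using pair_spec by (simp add: hom_iff)
lemma Dm_pair[simp]: "f \<in> Ar C \<Longrightarrow> g \<in> Ar C \<Longrightarrow> Dm C f = Dm C g \<Longrightarrow> Dm C (pair C f g) = Dm C f"
  using pair_spec by (simp add: hom_iff)
lemma Cd_pair[simp]: "f \<in> Ar C \<Longrightarrow> g \<in> Ar C \<Longrightarrow> Dm C f = Dm C g \<Longrightarrow>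
    Cd C (pair C f g) = Prd C (Cd C f) (Cd C g)"
  using pair_spec by (simp add: hom_iff)
lemma Pr1_pair[simp]: "f \<in> Ar C \<Longrightarrow> g \<in> Ar C \<Longrightarrow> Dm C f = Dm C g \<Longrightarrow> A = Cd C f \<Longrightarrow> B = Cd C g \<Longrightarrow>
    Cmp C (Pr1 C A B) (pair C f g) = f"
  using pair_spec by simp
lemma Pr2_pair[simp]: "f \<in> Ar C \<Longrightarrow> g \<in> Ar C \<Longrightarrow> Dm C f = Dm C g \<Longrightarrow> A = Cd C f \<Longrightarrow> B = Cd C g \<Longrightarrow>
    Cmp C (Pr2 C A B) (pair C f g) = g"
  using pair_spec by simp

lemma pair_Pr_Cmp[simp]:
  assumes "h \<in> Ar C" "Cd C h = Prd C A B" "A \<in> Ob C" "B \<in> Ob C"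
  shows "pair C (Cmp C (Pr1 C A B) h) (Cmp C (Pr2 C A B) h) = h"
proof -
  let ?f = "Cmp C (Pr1 C A B) h" and ?g = "Cmp C (Pr2 C A B) h"
  have f: "?f \<in> Ar C" "Dm C ?f = Dm C h" "Cd C ?f = A" using assms by auto
  have g: "?g \<in> Ar C" "Dm C ?g = Dm C h" "Cd C ?g = B" using assms by auto
  have "\<exists>!k. k \<in> hom C (Dm C h) (Prd C A B) \<and> Cmp C (Pr1 C A B) k = ?f \<and> Cmp C (Pr2 C A B) k = ?g"
    using f g assms by (intro pair_ex1) (auto simp: hom_iff)
  moreover have "h \<in> hom C (Dm C h) (Prd C A B)" using assms by (simp add: hom_iff)
  moreover have "pair C ?f ?g \<in> hom C (Dm C h) (Prd C A B)" using f g by (simp add: hom_iff)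
  moreover have "Cmp C (Pr1 C A B) (pair C ?f ?g) = ?f" "Cmp C (Pr2 C A B) (pair C ?f ?g) = ?g"
    using f g by simp_all
  ultimately show ?thesis by blast
qed

lemma pair_Pr1_Pr2[simp]: "A \<in> Ob C \<Longrightarrow> B \<in> Ob C \<Longrightarrow> pair C (Pr1 C A B) (Pr2 C A B) = Idt C (Prd C A B)"
  using pair_Pr_Cmp[of "Idt C (Prd C A B)" A B] by simp

lemma pair_Cmp[simp]:
  "f \<in> Ar C \<Longrightarrow> g \<in> Ar C \<Longrightarrow> h \<in> Ar C \<Longrightarrow> Dm C f = Dm C g \<Longrightarrow> Cd C h = Dm C f \<Longrightarrow>
    Cmp C (pair C f g) h = pair C (Cmp C f h) (Cmp C g h)"
  using pair_Pr_Cmp[of "Cmp C (pair C f g) h" "Cd C f" "Cd C g"]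
  by (simp del: pair_Pr_Cmp add: Cmp_assoc[symmetric])

lemma Prd_arrow_eqI:
  assumes "h \<in> Ar C" "k \<in> Ar C" "Cd C h = Prd C A B" "Cd C k = Prd C A B" "A \<in> Ob C" "B \<in> Ob C"
    "Cmp C (Pr1 C A B) h = Cmp C (Pr1 C A B) k" "Cmp C (Pr2 C A B) h = Cmp C (Pr2 C A B) k"
  shows "h = k"
  using pair_Pr_Cmp[of h A B] pair_Pr_Cmp[of k A B] assms by metis

lemmas times_eq[simp] = times_def

lemma times_Idt_simps[simp]:
  assumes "f \<in> Ar C" "B \<in> Ob C"
  shows "times C f (Idt C B) \<in> Ar C" "Dm C (times C f (Idt C B)) = Prd C (Dm C f) B"
    "Cd C (times C f (Idt C B)) = Prd C (Cd C f) B"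
  using assms by simp_all

definition to_Trm :: "'o \<Rightarrow> 'a" where
  "to_Trm X = (THE h. h \<in> hom C X (Trm C))"

lemma to_Trm_hom: "X \<in> Ob C \<Longrightarrow> to_Trm X \<in> hom C X (Trm C)"
  unfolding to_Trm_def using fin_products unfolding fin_products_def by (metis theI')
lemma to_Trm_Ar[simp]: "X \<in> Ob C \<Longrightarrow> to_Trm X \<in> Ar C"
  using to_Trm_hom by (simp add: hom_iff)
lemma Dm_to_Trm[simp]: "X \<in> Ob C \<Longrightarrow> Dm C (to_Trm X) = X"
  using to_Trm_hom by (simp add: hom_iff)
lemma Cd_to_Trm[simp]: "X \<in> Ob C \<Longrightarrow> Cd C (to_Trm X) = Trm C"
  using to_Trm_hom by (simp add: hom_iff)

lemma to_Trm_unique: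
  assumes "h \<in> Ar C" "Cd C h = Trm C"
  shows "h = to_Trm (Dm C h)"
proof -
  have "\<exists>!k. k \<in> hom C (Dm C h) (Trm C)" using fin_products assms unfolding fin_products_def by simp
  then show ?thesis using to_Trm_hom[of "Dm C h"] assms by (auto simp: hom_iff)
qed

lemma iso_ar_inv:
  assumes "iso_ar C f"
  shows "inv_ar C f \<in> Ar C" "Dm C (inv_ar C f) = Cd C f" "Cd C (inv_ar C f) = Dm C f"
    "Cmp C (inv_ar C f) f = Idt C (Dm C f)" "Cmp C f (inv_ar C f) = Idt C (Cd C f)"
proof -
  obtain g where g: "g \<in> hom C (Cd C f) (Dm C f)" "Cmp C g f = Idt C (Dm C f)" "Cmp C f g = Idt C (Cd C f)"
    and f: "f \<in> Ar C"
    using assms unfolding iso_ar_def by blast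
  have "g' = g" if g': "g' \<in> hom C (Cd C f) (Dm C f)" "Cmp C g' f = Idt C (Dm C f)" for g'
  proof -
    have "g' = Cmp C g' (Cmp C f g)" using g g' f by (simp add: hom_iff)
    also have "\<dots> = Cmp C (Cmp C g' f) g"
      by (rule Cmp_assoc[symmetric]) (use g g' f in \<open>auto simp: hom_iff\<close>)
    also have "\<dots> = g" using g g' f by (simp add: hom_iff del: Cmp_assoc)
    finally show ?thesis .
  qed
  then have "\<exists>!g. g \<in> hom C (Cd C f) (Dm C f) \<and> Cmp C g f = Idt C (Dm C f) \<and> Cmp C f g = Idt C (Cd C f)"
    using g by blast
  then have "inv_ar C f \<in> hom C (Cd C f) (Dm C f) \<and> Cmp C (inv_ar C f) f = Idt C (Dm C f) \<and>
     Cmp C f (inv_ar C f) = Idt C (Cd C f)"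
    unfolding inv_ar_def by (rule theI')
  then show "inv_ar C f \<in> Ar C" "Dm C (inv_ar C f) = Cd C f" "Cd C (inv_ar C f) = Dm C f"
    "Cmp C (inv_ar C f) f = Idt C (Dm C f)" "Cmp C f (inv_ar C f) = Idt C (Cd C f)"
    by (auto simp: hom_iff)
qed

lemma inv_ar_Idt[simp]: "X \<in> Ob C \<Longrightarrow> inv_ar C (Idt C X) = Idt C X"
proof -
  assume X: "X \<in> Ob C"
  then have "iso_ar C (Idt C X)" unfolding iso_ar_def by (auto simp: hom_iff intro!: bexI[of _ "Idt C X"])
  from iso_ar_inv[OF this] X show ?thesis by (metis Cd_Idt Cmp_Idt_right Dm_Idt)
qed

definition assoc :: "'o \<Rightarrow> 'o \<Rightarrow> 'o \<Rightarrow> 'a" where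
  "assoc A B D = pair C (pair C (Pr1 C A (Prd C B D)) (Cmp C (Pr1 C B D) (Pr2 C A (Prd C B D))))
                      (Cmp C (Pr2 C B D) (Pr2 C A (Prd C B D)))"

definition assoc_inv :: "'o \<Rightarrow> 'o \<Rightarrow> 'o \<Rightarrow> 'a" where
  "assoc_inv A B D = pair C (Cmp C (Pr1 C A B) (Pr1 C (Prd C A B) D))
     (pair C (Cmp C (Pr2 C A B) (Pr1 C (Prd C A B) D)) (Pr2 C (Prd C A B) D))"

context
  fixes A B D assumes ob: "A \<in> Ob C" "B \<in> Ob C" "D \<in> Ob C"
begin

lemma assoc_simps[simp]:
  "assoc A B D \<in> Ar C" "Dm C (assoc A B D) = Prd C A (Prd C B D)" "Cd C (assoc A B D) = Prd C (Prd C A B) D"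
  "assoc_inv A B D \<in> Ar C" "Dm C (assoc_inv A B D) = Prd C (Prd C A B) D"
  "Cd C (assoc_inv A B D) = Prd C A (Prd C B D)"
  using ob by (simp_all add: assoc_def assoc_inv_def)

lemma assoc_assoc_inv: "Cmp C (assoc A B D) (assoc_inv A B D) = Idt C (Prd C (Prd C A B) D)"
  using ob by (simp add: assoc_def assoc_inv_def)

end

lemma is_exponential_weak: "is_exponential C B D E ev \<Longrightarrow> weak_exponential C B D E ev"
  unfolding is_exponential_def weak_exponential_def by blast

lemma weak_exponentialD:
  assumes "weak_exponential C B D E ev"
  shows "E \<in> Ob C" "ev \<in> Ar C" "Dm C ev = Prd C E B" "Cd C ev = D"
  using assms by (auto simp: weak_exponential_def hom_iff)

lemma weak_exponential_transpose:
  assumes "weak_exponential C B D E ev" "A \<in> Ob C" "B \<in> Ob C" "h \<in> Ar C" "Dm C h = Prd C A B" "Cd C h = D"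
  obtains g where "g \<in> Ar C" "Dm C g = A" "Cd C g = E"
    "Cmp C ev (pair C (Cmp C g (Pr1 C A B)) (Pr2 C A B)) = h"
proof -
  have "h \<in> hom C (Prd C A B) D" using assms by (simp add: hom_iff)
  then obtain g where g: "g \<in> hom C A E" "Cmp C ev (times C g (Idt C B)) = h"
    using assms unfolding weak_exponential_def by blast
  then show ?thesis using that assms weak_exponentialD[OF assms(1)] by (auto simp: hom_iff)
qed

lemma weak_exponential_Trm:
  assumes "B \<in> Ob C"
  shows "weak_exponential C B (Trm C) (Trm C) (to_Trm (Prd C (Trm C) B))"
  unfolding weak_exponential_def
proof (intro conjI ballI)
  fix A h assume A: "A \<in> Ob C" and h: "h \<in> hom C (Prd C A B) (Trm C)"
  have "Cmp C (to_Trm (Prd C (Trm C) B)) (times C (to_Trm A) (Idt C B)) = h"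
    using to_Trm_unique[of h] to_Trm_unique[of "Cmp C (to_Trm (Prd C (Trm C) B)) (times C (to_Trm A) (Idt C B))"]
      A h assms by (simp add: hom_iff)
  then show "\<exists>g\<in>hom C A (Trm C). Cmp C (to_Trm (Prd C (Trm C) B)) (times C g (Idt C B)) = h"
    using A to_Trm_hom by blast
qed (use assms in \<open>simp_all add: hom_iff\<close>)

lemma weak_exponential_Prd:
  assumes w1: "weak_exponential C B D1 E1 ev1" and w2: "weak_exponential C B D2 E2 ev2" and B: "B \<in> Ob C"
  shows "weak_exponential C B (Prd C D1 D2) (Prd C E1 E2)
    (pair C (Cmp C ev1 (times C (Pr1 C E1 E2) (Idt C B))) (Cmp C ev2 (times C (Pr2 C E1 E2) (Idt C B))))"
    (is "weak_exponential C B ?D ?E ?ev")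
proof -
  note e1[simp] = weak_exponentialD[OF w1] and e2[simp] = weak_exponentialD[OF w2]
  have D[simp]: "D1 \<in> Ob C" "D2 \<in> Ob C" using Cd_Ob[OF e1(2)] Cd_Ob[OF e2(2)] by simp_all
  have "\<exists>g\<in>hom C A ?E. Cmp C ?ev (times C g (Idt C B)) = h" if A: "A \<in> Ob C" and h: "h \<in> hom C (Prd C A B) ?D" for A h
  proof -
    have h': "h \<in> Ar C" "Dm C h = Prd C A B" "Cd C h = Prd C D1 D2" using h by (simp_all add: hom_iff)
    obtain g1 where g1: "g1 \<in> Ar C" "Dm C g1 = A" "Cd C g1 = E1"
      "Cmp C ev1 (pair C (Cmp C g1 (Pr1 C A B)) (Pr2 C A B)) = Cmp C (Pr1 C D1 D2) h"
      by (rule weak_exponential_transpose[OF w1 A B, where h = "Cmp C (Pr1 C D1 D2) h"]) (simp_all add: h')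
    obtain g2 where g2: "g2 \<in> Ar C" "Dm C g2 = A" "Cd C g2 = E2"
      "Cmp C ev2 (pair C (Cmp C g2 (Pr1 C A B)) (Pr2 C A B)) = Cmp C (Pr2 C D1 D2) h"
      by (rule weak_exponential_transpose[OF w2 A B, where h = "Cmp C (Pr2 C D1 D2) h"]) (simp_all add: h')
    have "Cmp C ?ev (times C (pair C g1 g2) (Idt C B)) = h"
      by (rule Prd_arrow_eqI[of _ _ D1 D2]) (simp_all add: A B g1 g2 h')
    then show ?thesis using g1 g2 by (intro bexI[of _ "pair C g1 g2"]) (simp_all add: hom_iff)
  qed
  then show ?thesis using B by (simp add: weak_exponential_def hom_iff)
qed

text \<open>\<open>skolem_map A B E ev : (A \<times> E) \<times> B \<rightarrow> (A \<times> B) \<times> D\<close> is \<open>((a, e), b) \<mapsto> ((a, b), ev(e, b))\<close>: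
  reindexing along it replaces a witness \<open>d \<in> D\<close> by the value \<open>ev(e, b)\<close> of a Skolem function.\<close>
definition skolem_map :: "'o \<Rightarrow> 'o \<Rightarrow> 'o \<Rightarrow> 'a \<Rightarrow> 'a" where
  "skolem_map A B E ev = pair C (pair C (Cmp C (Pr1 C A E) (Pr1 C (Prd C A E) B)) (Pr2 C (Prd C A E) B))
     (Cmp C ev (pair C (Cmp C (Pr2 C A E) (Pr1 C (Prd C A E) B)) (Pr2 C (Prd C A E) B)))"

lemma skolem_map_simps[simp]:
  assumes "weak_exponential C B D E ev" "A \<in> Ob C" "B \<in> Ob C"
  shows "skolem_map A B E ev \<in> Ar C" "Dm C (skolem_map A B E ev) = Prd C (Prd C A E) B"
    "Cd C (skolem_map A B E ev) = Prd C (Prd C A B) D"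
  using assms weak_exponentialD[OF assms(1)] by (simp_all add: skolem_map_def)

text \<open>Both sides are \<open>((a, (e\<^sub>1, e\<^sub>2)), b) \<mapsto> (((a, b), ev\<^sub>1(e\<^sub>1, b)), ev\<^sub>2(e\<^sub>2, b))\<close>.\<close>
lemma skolem_map_Prd:
  assumes w1: "weak_exponential C B D1 E1 ev1" and w2: "weak_exponential C B D2 E2 ev2"
    and A: "A \<in> Ob C" and B: "B \<in> Ob C"
  defines "ev \<equiv> pair C (Cmp C ev1 (times C (Pr1 C E1 E2) (Idt C B))) (Cmp C ev2 (times C (Pr2 C E1 E2) (Idt C B)))"
  shows "Cmp C (times C (skolem_map A B E1 ev1) (Idt C D2))
      (Cmp C (skolem_map (Prd C A E1) B E2 ev2) (times C (assoc A E1 E2) (Idt C B))) =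
    Cmp C (assoc (Prd C A B) D1 D2) (skolem_map A B (Prd C E1 E2) ev)"
    (is "?lhs = ?rhs")
proof -
  note e1[simp] = weak_exponentialD[OF w1] and e2[simp] = weak_exponentialD[OF w2]
  have D[simp]: "D1 \<in> Ob C" "D2 \<in> Ob C" using Cd_Ob[OF e1(2)] Cd_Ob[OF e2(2)] by simp_all
  have w: "weak_exponential C B (Prd C D1 D2) (Prd C E1 E2) ev"
    unfolding ev_def using w1 w2 B by (rule weak_exponential_Prd)
  note ob[simp] = A B and ev[simp] = weak_exponentialD[OF w]
  note k[simp] = skolem_map_simps[OF w1 A B] skolem_map_simps[OF w2 _ B] skolem_map_simps[OF w A B]
  have lhs: "?lhs \<in> Ar C" "Cd C ?lhs = Prd C (Prd C (Prd C A B) D1) D2"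
    by simp_all
  have rhs: "?rhs \<in> Ar C" "Cd C ?rhs = Prd C (Prd C (Prd C A B) D1) D2"
    by simp_all
  have "Cmp C (Pr1 C (Prd C A B) D1) (Cmp C (Pr1 C (Prd C (Prd C A B) D1) D2) ?lhs) =
      Cmp C (Pr1 C (Prd C A B) D1) (Cmp C (Pr1 C (Prd C (Prd C A B) D1) D2) ?rhs)"
    by (simp add: skolem_map_def assoc_def)
  moreover have "Cmp C (Pr2 C (Prd C A B) D1) (Cmp C (Pr1 C (Prd C (Prd C A B) D1) D2) ?lhs) =
      Cmp C (Pr2 C (Prd C A B) D1) (Cmp C (Pr1 C (Prd C (Prd C A B) D1) D2) ?rhs)"
    by (simp add: skolem_map_def assoc_def ev_def)
  ultimately have "Cmp C (Pr1 C (Prd C (Prd C A B) D1) D2) ?lhs = Cmp C (Pr1 C (Prd C (Prd C A B) D1) D2) ?rhs"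
    by (rule Prd_arrow_eqI[rotated 6]) (use lhs rhs in simp_all)
  moreover have "Cmp C (Pr2 C (Prd C (Prd C A B) D1) D2) ?lhs = Cmp C (Pr2 C (Prd C (Prd C A B) D1) D2) ?rhs"
    by (simp add: skolem_map_def assoc_def ev_def)
  ultimately show ?thesis by (rule Prd_arrow_eqI[rotated 6]) (use lhs rhs in simp_all)
qed

lemma id_functor: "is_functor C C id id"
  unfolding is_functor_def by (auto simp: hom_iff)

lemma cmpr_id[simp]: "A \<in> Ob C \<Longrightarrow> B \<in> Ob C \<Longrightarrow> cmpr C C id id A B = Idt C (Prd C A B)"
  by (simp add: cmpr_def)

lemma id_preserves_products: "preserves_products C C id id"
  unfolding preserves_products_def iso_ar_def
  using fin_products by (auto simp: fin_products_def hom_iff intro!: bexI[of _ "Idt C (Prd C _ _)"])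

lemma id_preserves_exponents: "preserves_exponents C C id id"
  unfolding preserves_exponents_def
  by (auto simp: is_exponential_def hom_iff)

end

section \<open>Doctrines and their existential completion\<close>

definition is_forall_val :: "('o,'a,'z) ccat_scheme \<Rightarrow> ('a,'o,'e) pdoc \<Rightarrow> 'o \<Rightarrow> 'o \<Rightarrow> 'e \<Rightarrow> 'e \<Rightarrow> bool" where
  "is_forall_val C P A B y t \<longleftrightarrow>
     t \<in> Car P A \<and> (\<forall>x\<in>Car P A. Leq P (Prd C A B) (Rdx P (Pr1 C A B) x) y \<longleftrightarrow> Leq P A x t)"

lemma is_forall_iff: "is_forall C P A B u \<longleftrightarrow> (\<forall>y\<in>Car P (Prd C A B). is_forall_val C P A B y (u y))"
  unfolding is_forall_def is_forall_val_def by blast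

lemma Car_Pex: "Car (Pex C P) A = {ex_cls C P A B \<alpha> | B \<alpha>. B \<in> Ob C \<and> \<alpha> \<in> Car P (Prd C A B)}"
  by (simp add: Pex_def)

lemma Leq_Pex: "Leq (Pex C P) A s t \<longleftrightarrow> (\<exists>p\<in>s. \<exists>q\<in>t. exle C P A p q)"
  by (simp add: Pex_def)

lemma Rdx_Pex: "Rdx (Pex C P) f s =
    (\<Union>p\<in>s. ex_cls C P (Dm C f) (fst p) (Rdx P (times C f (Idt C (fst p))) (snd p)))"
  by (simp add: Pex_def)

locale slat_doctrine = cartesian_category C for C :: "('o,'a,'z) ccat_scheme" +
  fixes P :: "('a,'o,'e) pdoc"
  assumes doctrine: "doctrine C P"
begin

lemma Leq_refl[simp]: "X \<in> Ob C \<Longrightarrow> x \<in> Car P X \<Longrightarrow> Leq P X x x"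
  using doctrine[unfolded doctrine_def, THEN conjunct1] by blast
lemma Leq_trans: "X \<in> Ob C \<Longrightarrow> x \<in> Car P X \<Longrightarrow> y \<in> Car P X \<Longrightarrow> z \<in> Car P X \<Longrightarrow>
    Leq P X x y \<Longrightarrow> Leq P X y z \<Longrightarrow> Leq P X x z"
  using doctrine[unfolded doctrine_def, THEN conjunct1] by blast
lemma Leq_antisym: "X \<in> Ob C \<Longrightarrow> x \<in> Car P X \<Longrightarrow> y \<in> Car P X \<Longrightarrow> Leq P X x y \<Longrightarrow> Leq P X y x \<Longrightarrow> x = y"
  using doctrine[unfolded doctrine_def, THEN conjunct1] by blast
lemma Rdx_Car[simp]: "f \<in> Ar C \<Longrightarrow> x \<in> Car P (Cd C f) \<Longrightarrow> X = Dm C f \<Longrightarrow> Rdx P f x \<in> Car P X"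
  using doctrine[unfolded doctrine_def, THEN conjunct2, THEN conjunct1] by blast
lemma Rdx_mono: "f \<in> Ar C \<Longrightarrow> x \<in> Car P (Cd C f) \<Longrightarrow> y \<in> Car P (Cd C f) \<Longrightarrow> Leq P (Cd C f) x y \<Longrightarrow>
    Leq P (Dm C f) (Rdx P f x) (Rdx P f y)"
  using doctrine[unfolded doctrine_def, THEN conjunct2, THEN conjunct2, THEN conjunct1] by blast
lemma Rdx_Idt[simp]: "X \<in> Ob C \<Longrightarrow> x \<in> Car P X \<Longrightarrow> Rdx P (Idt C X) x = x"
  using doctrine[unfolded doctrine_def, THEN conjunct2, THEN conjunct2, THEN conjunct2, THEN conjunct1] by blast

lemma Rdx_Rdx[simp]:
  assumes "f \<in> Ar C" "g \<in> Ar C" "Cd C f = Dm C g" "x \<in> Car P (Cd C g)"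
  shows "Rdx P f (Rdx P g x) = Rdx P (Cmp C g f) x"
proof -
  have "f \<in> hom C (Dm C f) (Cd C f)" "g \<in> hom C (Cd C f) (Cd C g)" using assms by (auto simp: hom_iff)
  then show ?thesis
    using doctrine[unfolded doctrine_def, THEN conjunct2, THEN conjunct2, THEN conjunct2, THEN conjunct2] assms(4)
    by metis
qed

lemma forall_val_unique:
  assumes t: "is_forall_val C P A B y t" and t': "is_forall_val C P A B y t'" and A: "A \<in> Ob C"
  shows "t = t'"
proof -
  have c: "t \<in> Car P A" "t' \<in> Car P A"
    and t_adj: "\<And>x. x \<in> Car P A \<Longrightarrow> Leq P (Prd C A B) (Rdx P (Pr1 C A B) x) y \<longleftrightarrow> Leq P A x t"
    and t'_adj: "\<And>x. x \<in> Car P A \<Longrightarrow> Leq P (Prd C A B) (Rdx P (Pr1 C A B) x) y \<longleftrightarrow> Leq P A x t'"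
    using t t' unfolding is_forall_val_def by blast+
  have "Leq P A t t'" using t_adj[of t] t'_adj[of t] c A by simp
  moreover have "Leq P A t' t" using t_adj[of t'] t'_adj[of t'] c A by simp
  ultimately show ?thesis using Leq_antisym c A by blast
qed

lemma is_forall_eq:
  "is_forall C P A B u \<Longrightarrow> is_forall_val C P A B y t \<Longrightarrow> A \<in> Ob C \<Longrightarrow> y \<in> Car P (Prd C A B) \<Longrightarrow> u y = t"
  using forall_val_unique unfolding is_forall_iff by blast

definition ex_pairs :: "'o \<Rightarrow> ('o \<times> 'e) set" where
  "ex_pairs A = {p. fst p \<in> Ob C \<and> snd p \<in> Car P (Prd C A (fst p))}"

lemma ex_pairs_iff[simp]: "(B, \<alpha>) \<in> ex_pairs A \<longleftrightarrow> B \<in> Ob C \<and> \<alpha> \<in> Car P (Prd C A B)"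
  by (simp add: ex_pairs_def)

lemma exleI:
  assumes "A \<in> Ob C" "B \<in> Ob C" "B' \<in> Ob C" "M \<in> Ar C" "Dm C M = Prd C A B" "Cd C M = Prd C A B'"
    "Cmp C (Pr1 C A B') M = Pr1 C A B" "Leq P (Prd C A B) \<alpha> (Rdx P M \<alpha>')"
  shows "exle C P A (B, \<alpha>) (B', \<alpha>')"
proof -
  let ?f = "Cmp C (Pr2 C A B') M"
  have "?f \<in> hom C (Prd C A B) B'" using assms by (simp add: hom_iff)
  moreover have "pair C (Pr1 C A B) ?f = M"
    using pair_Pr_Cmp[of M A B'] assms by simp
  ultimately show ?thesis unfolding exle_def using assms(8) by (metis fst_conv snd_conv)
qed

lemma exleE:
  assumes "exle C P A (B, \<alpha>) (B', \<alpha>')" "A \<in> Ob C" "B \<in> Ob C" "B' \<in> Ob C"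
  obtains M where "M \<in> Ar C" "Dm C M = Prd C A B" "Cd C M = Prd C A B'"
    "Cmp C (Pr1 C A B') M = Pr1 C A B" "Leq P (Prd C A B) \<alpha> (Rdx P M \<alpha>')"
proof -
  obtain f where f: "f \<in> hom C (Prd C A B) B'" "Leq P (Prd C A B) \<alpha> (Rdx P (pair C (Pr1 C A B) f) \<alpha>')"
    using assms(1) unfolding exle_def by auto
  show ?thesis
    by (rule that[of "pair C (Pr1 C A B) f"]) (use f assms in \<open>auto simp: hom_iff\<close>)
qed

lemma exle_refl: "A \<in> Ob C \<Longrightarrow> (B, \<alpha>) \<in> ex_pairs A \<Longrightarrow> exle C P A (B, \<alpha>) (B, \<alpha>)"
  by (rule exleI[where M = "Idt C (Prd C A B)"]) auto

lemma exle_trans: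
  assumes A: "A \<in> Ob C" and ex_pairs: "(B, \<alpha>) \<in> ex_pairs A" "(B', \<alpha>') \<in> ex_pairs A" "(B'', \<alpha>'') \<in> ex_pairs A"
    and le: "exle C P A (B, \<alpha>) (B', \<alpha>')" "exle C P A (B', \<alpha>') (B'', \<alpha>'')"
  shows "exle C P A (B, \<alpha>) (B'', \<alpha>'')"
proof -
  have ob: "B \<in> Ob C" "B' \<in> Ob C" "B'' \<in> Ob C" and c: "\<alpha> \<in> Car P (Prd C A B)" "\<alpha>' \<in> Car P (Prd C A B')"
    "\<alpha>'' \<in> Car P (Prd C A B'')" using ex_pairs by auto
  obtain M1 where M1: "M1 \<in> Ar C" "Dm C M1 = Prd C A B" "Cd C M1 = Prd C A B'"
    "Cmp C (Pr1 C A B') M1 = Pr1 C A B" "Leq P (Prd C A B) \<alpha> (Rdx P M1 \<alpha>')"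
    using exleE[OF le(1) A ob(1,2)] by blast
  obtain M2 where M2: "M2 \<in> Ar C" "Dm C M2 = Prd C A B'" "Cd C M2 = Prd C A B''"
    "Cmp C (Pr1 C A B'') M2 = Pr1 C A B'" "Leq P (Prd C A B') \<alpha>' (Rdx P M2 \<alpha>'')"
    using exleE[OF le(2) A ob(2,3)] by blast
  show ?thesis
  proof (rule exleI[where M = "Cmp C M2 M1"])
    show "Cmp C (Pr1 C A B'') (Cmp C M2 M1) = Pr1 C A B"
      using M1 M2 A ob by (simp add: Cmp_assoc[symmetric] del: Cmp_assoc)
    have "Leq P (Prd C A B) (Rdx P M1 \<alpha>') (Rdx P M1 (Rdx P M2 \<alpha>''))"
      using Rdx_mono[of M1 \<alpha>' "Rdx P M2 \<alpha>''"] M1 M2 c A ob by simp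
    then show "Leq P (Prd C A B) \<alpha> (Rdx P (Cmp C M2 M1) \<alpha>'')"
      using Leq_trans[OF _ c(1) _ _ M1(5)] M1 M2 c A ob by simp
  qed (use M1 M2 A ob in auto)
qed

abbreviation cls where "cls A B \<alpha> \<equiv> ex_cls C P A B \<alpha>"

lemma cls_iff: "q \<in> cls A B \<alpha> \<longleftrightarrow> q \<in> ex_pairs A \<and> exle C P A (B, \<alpha>) q \<and> exle C P A q (B, \<alpha>)"
  by (auto simp: ex_cls_def ex_pairs_def)

lemma cls_self: "A \<in> Ob C \<Longrightarrow> (B, \<alpha>) \<in> ex_pairs A \<Longrightarrow> (B, \<alpha>) \<in> cls A B \<alpha>"
  using exle_refl cls_iff by blast

lemma cls_eqI:
  assumes "A \<in> Ob C" "(B, \<alpha>) \<in> ex_pairs A" "(B', \<alpha>') \<in> ex_pairs A"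
    "exle C P A (B, \<alpha>) (B', \<alpha>')" "exle C P A (B', \<alpha>') (B, \<alpha>)"
  shows "cls A B \<alpha> = cls A B' \<alpha>'"
proof (intro set_eqI iffI)
  fix q assume "q \<in> cls A B \<alpha>"
  then show "q \<in> cls A B' \<alpha>'" using assms exle_trans[of A] unfolding cls_iff by (cases q) blast
next
  fix q assume "q \<in> cls A B' \<alpha>'"
  then show "q \<in> cls A B \<alpha>" using assms exle_trans[of A] unfolding cls_iff by (cases q) blast
qed

lemma Car_PexE:
  assumes "s \<in> Car (Pex C P) A"
  obtains B \<alpha> where "B \<in> Ob C" "\<alpha> \<in> Car P (Prd C A B)" "s = cls A B \<alpha>"
  using assms by (auto simp: Car_Pex)

lemma cls_Car_Pex[simp]: "B \<in> Ob C \<Longrightarrow> \<alpha> \<in> Car P (Prd C A B) \<Longrightarrow> cls A B \<alpha> \<in> Car (Pex C P) A"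
  by (auto simp: Car_Pex)

lemma Leq_Pex_cls_iff:
  assumes "A \<in> Ob C" "(B, \<alpha>) \<in> ex_pairs A" "(B', \<alpha>') \<in> ex_pairs A"
  shows "Leq (Pex C P) A (cls A B \<alpha>) (cls A B' \<alpha>') \<longleftrightarrow> exle C P A (B, \<alpha>) (B', \<alpha>')"
proof
  assume "Leq (Pex C P) A (cls A B \<alpha>) (cls A B' \<alpha>')"
  then obtain p q where pq: "p \<in> cls A B \<alpha>" "q \<in> cls A B' \<alpha>'" "exle C P A p q"
    unfolding Leq_Pex by blast
  obtain B1 a1 where p: "p = (B1, a1)" by (cases p)
  obtain B2 a2 where q: "q = (B2, a2)" by (cases q)
  show "exle C P A (B, \<alpha>) (B', \<alpha>')"
    using pq assms exle_trans[of A] unfolding p q cls_iff by meson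
next
  assume "exle C P A (B, \<alpha>) (B', \<alpha>')"
  then show "Leq (Pex C P) A (cls A B \<alpha>) (cls A B' \<alpha>')"
    unfolding Leq_Pex using cls_self assms by blast
qed

lemma Leq_Pex_clsD: "Leq (Pex C P) A (cls A B \<alpha>) (cls A B' \<alpha>') \<Longrightarrow> A \<in> Ob C \<Longrightarrow> B \<in> Ob C \<Longrightarrow>
    \<alpha> \<in> Car P (Prd C A B) \<Longrightarrow> B' \<in> Ob C \<Longrightarrow> \<alpha>' \<in> Car P (Prd C A B') \<Longrightarrow> exle C P A (B, \<alpha>) (B', \<alpha>')"
  by (subst (asm) Leq_Pex_cls_iff) auto

lemma Leq_Pex_clsI: "exle C P A (B, \<alpha>) (B', \<alpha>') \<Longrightarrow> A \<in> Ob C \<Longrightarrow> B \<in> Ob C \<Longrightarrow>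
    \<alpha> \<in> Car P (Prd C A B) \<Longrightarrow> B' \<in> Ob C \<Longrightarrow> \<alpha>' \<in> Car P (Prd C A B') \<Longrightarrow>
    Leq (Pex C P) A (cls A B \<alpha>) (cls A B' \<alpha>')"
  by (subst Leq_Pex_cls_iff) auto

lemma exle_reindex:
  assumes f: "f \<in> Ar C" "Cd C f = A" and A: "A \<in> Ob C" and ex_pairs: "(B, \<alpha>) \<in> ex_pairs A" "(B', \<alpha>') \<in> ex_pairs A"
    and le: "exle C P A (B, \<alpha>) (B', \<alpha>')"
  shows "exle C P (Dm C f) (B, Rdx P (times C f (Idt C B)) \<alpha>) (B', Rdx P (times C f (Idt C B')) \<alpha>')"
proof -
  have ob: "B \<in> Ob C" "B' \<in> Ob C" and c: "\<alpha> \<in> Car P (Prd C A B)" "\<alpha>' \<in> Car P (Prd C A B')"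
    using ex_pairs by auto
  let ?A' = "Dm C f"
  obtain M where M: "M \<in> Ar C" "Dm C M = Prd C A B" "Cd C M = Prd C A B'"
    "Cmp C (Pr1 C A B') M = Pr1 C A B" "Leq P (Prd C A B) \<alpha> (Rdx P M \<alpha>')"
    using exleE[OF le A ob] by blast
  have Ml: "Cmp C (Pr1 C A B') (Cmp C M x) = Cmp C (Pr1 C A B) x" if "x \<in> Ar C" "Cd C x = Prd C A B" for x
    using Cmp_Cmp_eq[OF M(4)] M that A ob by simp
  let ?fB = "times C f (Idt C B)" and ?fB' = "times C f (Idt C B')"
  let ?M' = "pair C (Pr1 C ?A' B) (Cmp C (Pr2 C A B') (Cmp C M ?fB))"
  have eq: "Cmp C M ?fB = Cmp C ?fB' ?M'"
    by (rule Prd_arrow_eqI[of _ _ A B']) (simp_all add: f A ob M Ml)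
  show ?thesis
  proof (rule exleI[where M = ?M'])
    have "Leq P (Prd C ?A' B) (Rdx P ?fB \<alpha>) (Rdx P ?fB (Rdx P M \<alpha>'))"
      using Rdx_mono[of ?fB \<alpha> "Rdx P M \<alpha>'"] M f A ob c by simp
    also have "Rdx P ?fB (Rdx P M \<alpha>') = Rdx P ?M' (Rdx P ?fB' \<alpha>')"
      using M f A ob c eq by simp
    finally show "Leq P (Prd C ?A' B) (Rdx P ?fB \<alpha>) (Rdx P ?M' (Rdx P ?fB' \<alpha>'))" .
  qed (use f A ob M in simp_all)
qed

lemma Rdx_Pex_cls:
  assumes f: "f \<in> Ar C" "Cd C f = A" and B: "B \<in> Ob C" and \<alpha>: "\<alpha> \<in> Car P (Prd C A B)"
  shows "Rdx (Pex C P) f (cls A B \<alpha>) = cls (Dm C f) B (Rdx P (times C f (Idt C B)) \<alpha>)"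
proof -
  have A: "A \<in> Ob C" using f by auto
  have e: "(B, \<alpha>) \<in> ex_pairs A" using B \<alpha> by simp
  have "ex_cls C P (Dm C f) (fst p) (Rdx P (times C f (Idt C (fst p))) (snd p))
        = cls (Dm C f) B (Rdx P (times C f (Idt C B)) \<alpha>)" if p: "p \<in> cls A B \<alpha>" for p
  proof -
    obtain B1 a1 where pp: "p = (B1, a1)" by (cases p)
    have p1: "(B1, a1) \<in> ex_pairs A" "exle C P A (B, \<alpha>) (B1, a1)" "exle C P A (B1, a1) (B, \<alpha>)"
      using p unfolding pp cls_iff by auto
    show ?thesis unfolding pp fst_conv snd_conv
      by (rule cls_eqI) (use p1 e f A B exle_reindex[OF f A] in \<open>auto\<close>)
  qed
  moreover have "(B, \<alpha>) \<in> cls A B \<alpha>" using cls_self[OF A e] .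
  ultimately show ?thesis unfolding Rdx_Pex by auto
qed

lemma Pex_partial_order:
  assumes X: "X \<in> Ob C"
  shows "(\<forall>x\<in>Car (Pex C P) X. Leq (Pex C P) X x x) \<and>
    (\<forall>x\<in>Car (Pex C P) X. \<forall>y\<in>Car (Pex C P) X. \<forall>z\<in>Car (Pex C P) X.
       Leq (Pex C P) X x y \<longrightarrow> Leq (Pex C P) X y z \<longrightarrow> Leq (Pex C P) X x z) \<and>
    (\<forall>x\<in>Car (Pex C P) X. \<forall>y\<in>Car (Pex C P) X. Leq (Pex C P) X x y \<longrightarrow> Leq (Pex C P) X y x \<longrightarrow> x = y)"
proof (intro conjI ballI impI)
  fix x assume "x \<in> Car (Pex C P) X"
  then obtain B \<alpha> where "B \<in> Ob C" "\<alpha> \<in> Car P (Prd C X B)" "x = cls X B \<alpha>" by (rule Car_PexE)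
  then show "Leq (Pex C P) X x x" by (simp add: Leq_Pex_cls_iff[OF X] exle_refl[OF X])
next
  fix x y z assume "x \<in> Car (Pex C P) X" "y \<in> Car (Pex C P) X" "z \<in> Car (Pex C P) X"
    and le: "Leq (Pex C P) X x y" "Leq (Pex C P) X y z"
  then obtain B \<alpha> B' \<alpha>' B'' \<alpha>'' where x: "B \<in> Ob C" "\<alpha> \<in> Car P (Prd C X B)" "x = cls X B \<alpha>"
    and y: "B' \<in> Ob C" "\<alpha>' \<in> Car P (Prd C X B')" "y = cls X B' \<alpha>'"
    and z: "B'' \<in> Ob C" "\<alpha>'' \<in> Car P (Prd C X B'')" "z = cls X B'' \<alpha>''"
    by (metis Car_PexE)
  have "exle C P X (B, \<alpha>) (B', \<alpha>')" "exle C P X (B', \<alpha>') (B'', \<alpha>'')"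
    using le unfolding x(3) y(3) z(3) by (auto intro!: Leq_Pex_clsD X x y z)
  then have "exle C P X (B, \<alpha>) (B'', \<alpha>'')" by (rule exle_trans[OF X, rotated 3]) (simp_all add: x y z)
  then show "Leq (Pex C P) X x z" unfolding x(3) z(3) by (rule Leq_Pex_clsI) (simp_all add: X x z)
next
  fix x y assume "x \<in> Car (Pex C P) X" "y \<in> Car (Pex C P) X"
    and le: "Leq (Pex C P) X x y" "Leq (Pex C P) X y x"
  then obtain B \<alpha> B' \<alpha>' where x: "B \<in> Ob C" "\<alpha> \<in> Car P (Prd C X B)" "x = cls X B \<alpha>"
    and y: "B' \<in> Ob C" "\<alpha>' \<in> Car P (Prd C X B')" "y = cls X B' \<alpha>'"
    by (metis Car_PexE)
  have "exle C P X (B, \<alpha>) (B', \<alpha>')" "exle C P X (B', \<alpha>') (B, \<alpha>)"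
    using le unfolding x(3) y(3) by (auto intro!: Leq_Pex_clsD X x y)
  then show "x = y" unfolding x(3) y(3) by (rule cls_eqI[OF X, rotated 2]) (simp_all add: x y)
qed

lemma Pex_Rdx_Car:
  assumes f: "f \<in> Ar C" and x: "x \<in> Car (Pex C P) (Cd C f)"
  shows "Rdx (Pex C P) f x \<in> Car (Pex C P) (Dm C f)"
proof -
  obtain B \<alpha> where b: "B \<in> Ob C" "\<alpha> \<in> Car P (Prd C (Cd C f) B)" "x = cls (Cd C f) B \<alpha>"
    using x by (rule Car_PexE)
  then show ?thesis using f by (simp add: Rdx_Pex_cls)
qed

lemma Pex_Rdx_mono:
  assumes f: "f \<in> Ar C" and x: "x \<in> Car (Pex C P) (Cd C f)" and y: "y \<in> Car (Pex C P) (Cd C f)"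
    and le: "Leq (Pex C P) (Cd C f) x y"
  shows "Leq (Pex C P) (Dm C f) (Rdx (Pex C P) f x) (Rdx (Pex C P) f y)"
proof -
  obtain B \<alpha> where b: "B \<in> Ob C" "\<alpha> \<in> Car P (Prd C (Cd C f) B)" "x = cls (Cd C f) B \<alpha>"
    using x by (rule Car_PexE)
  obtain B' \<alpha>' where b': "B' \<in> Ob C" "\<alpha>' \<in> Car P (Prd C (Cd C f) B')" "y = cls (Cd C f) B' \<alpha>'"
    using y by (rule Car_PexE)
  have X: "Cd C f \<in> Ob C" "Dm C f \<in> Ob C" using f by auto
  have "exle C P (Cd C f) (B, \<alpha>) (B', \<alpha>')"
    using le unfolding b(3) b'(3) by (rule Leq_Pex_clsD) (simp_all add: X b b')
  then have "exle C P (Dm C f) (B, Rdx P (times C f (Idt C B)) \<alpha>) (B', Rdx P (times C f (Idt C B')) \<alpha>')"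
    by (rule exle_reindex[OF f refl X(1), rotated 2]) (simp_all add: b b')
  then show ?thesis
    unfolding b(3) b'(3) Rdx_Pex_cls[OF f refl b(1,2)] Rdx_Pex_cls[OF f refl b'(1,2)]
    by (rule Leq_Pex_clsI) (simp_all add: X f b b')
qed

lemma Pex_Rdx_Idt:
  assumes X: "X \<in> Ob C" and x: "x \<in> Car (Pex C P) X"
  shows "Rdx (Pex C P) (Idt C X) x = x"
proof -
  obtain B \<alpha> where b: "B \<in> Ob C" "\<alpha> \<in> Car P (Prd C X B)" "x = cls X B \<alpha>"
    using x by (rule Car_PexE)
  then show ?thesis using X by (simp add: Rdx_Pex_cls)
qed

lemma Pex_Rdx_Rdx:
  assumes f: "f \<in> Ar C" and g: "g \<in> Ar C" "Cd C f = Dm C g" and x: "x \<in> Car (Pex C P) (Cd C g)"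
  shows "Rdx (Pex C P) f (Rdx (Pex C P) g x) = Rdx (Pex C P) (Cmp C g f) x"
proof -
  obtain B \<alpha> where b: "B \<in> Ob C" "\<alpha> \<in> Car P (Prd C (Cd C g) B)" "x = cls (Cd C g) B \<alpha>"
    using x by (rule Car_PexE)
  then show ?thesis using f g by (simp add: Rdx_Pex_cls)
qed

lemma Pex_doctrine: "doctrine C (Pex C P)"
  unfolding doctrine_def
proof (intro conjI)
  show "\<forall>X Y Z f g. f \<in> hom C X Y \<longrightarrow> g \<in> hom C Y Z \<longrightarrow>
    (\<forall>x\<in>Car (Pex C P) Z. Rdx (Pex C P) (Cmp C g f) x = Rdx (Pex C P) f (Rdx (Pex C P) g x))"
    by (intro allI impI ballI) (simp add: hom_iff Pex_Rdx_Rdx)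
qed (intro ballI impI, (rule Pex_partial_order Pex_Rdx_Car Pex_Rdx_mono Pex_Rdx_Idt; assumption))+

lemma slat_doctrine_Pex: "slat_doctrine C (Pex C P)"
  by unfold_locales (rule Pex_doctrine)

lemma exle_assocD:
  assumes A: "A \<in> Ob C" and B: "B \<in> Ob C" and C': "C' \<in> Ob C" and D: "D \<in> Ob C"
    and \<gamma>: "\<gamma> \<in> Car P (Prd C (Prd C A B) C')" and \<delta>: "\<delta> \<in> Car P (Prd C A D)"
    and le: "exle C P A (Prd C B C', Rdx P (assoc A B C') \<gamma>) (D, \<delta>)"
  shows "exle C P (Prd C A B) (C', \<gamma>) (D, Rdx P (times C (Pr1 C A B) (Idt C D)) \<delta>)"
proof -
  note ob[simp] = A B C' D \<gamma> \<delta>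
  let ?a = "assoc A B C'" and ?a' = "assoc_inv A B C'" and ?q = "times C (Pr1 C A B) (Idt C D)"
  obtain M where M: "M \<in> Ar C" "Dm C M = Prd C A (Prd C B C')" "Cd C M = Prd C A D"
    "Cmp C (Pr1 C A D) M = Pr1 C A (Prd C B C')" "Leq P (Prd C A (Prd C B C')) (Rdx P ?a \<gamma>) (Rdx P M \<delta>)"
    using le by (rule exleE) simp_all
  have Ml: "Cmp C (Pr1 C A D) (Cmp C M y) = Cmp C (Pr1 C A (Prd C B C')) y"
    if "y \<in> Ar C" "Cd C y = Prd C A (Prd C B C')" for y
    by (rule Cmp_Cmp_eq[OF M(4)]) (simp_all add: M that)
  let ?N = "pair C (Pr1 C (Prd C A B) C') (Cmp C (Pr2 C A D) (Cmp C M ?a'))"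
  have "Cmp C M ?a' = Cmp C ?q ?N"
    by (rule Prd_arrow_eqI[of _ _ A D]) (simp_all add: M Ml assoc_inv_def)
  then have "Rdx P ?a' (Rdx P M \<delta>) = Rdx P ?N (Rdx P ?q \<delta>)" by (simp add: M)
  moreover have "Leq P (Dm C ?a') (Rdx P ?a' (Rdx P ?a \<gamma>)) (Rdx P ?a' (Rdx P M \<delta>))"
    by (rule Rdx_mono) (use M in simp_all)
  ultimately have "Leq P (Prd C (Prd C A B) C') \<gamma> (Rdx P ?N (Rdx P ?q \<delta>))"
    by (simp add: assoc_assoc_inv)
  then show ?thesis by (rule exleI[rotated -1]) (simp_all add: M assoc_inv_def)
qed

lemma exle_assocI:
  assumes A: "A \<in> Ob C" and B: "B \<in> Ob C" and C': "C' \<in> Ob C" and D: "D \<in> Ob C"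
    and \<gamma>: "\<gamma> \<in> Car P (Prd C (Prd C A B) C')" and \<delta>: "\<delta> \<in> Car P (Prd C A D)"
    and le: "exle C P (Prd C A B) (C', \<gamma>) (D, Rdx P (times C (Pr1 C A B) (Idt C D)) \<delta>)"
  shows "exle C P A (Prd C B C', Rdx P (assoc A B C') \<gamma>) (D, \<delta>)"
proof -
  note ob[simp] = A B C' D \<gamma> \<delta>
  let ?a = "assoc A B C'" and ?q = "times C (Pr1 C A B) (Idt C D)"
  obtain N where N: "N \<in> Ar C" "Dm C N = Prd C (Prd C A B) C'" "Cd C N = Prd C (Prd C A B) D"
    "Cmp C (Pr1 C (Prd C A B) D) N = Pr1 C (Prd C A B) C'"
    "Leq P (Prd C (Prd C A B) C') \<gamma> (Rdx P N (Rdx P ?q \<delta>))"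
    using le by (rule exleE) simp_all
  have Nl: "Cmp C (Pr1 C (Prd C A B) D) (Cmp C N y) = Cmp C (Pr1 C (Prd C A B) C') y"
    if "y \<in> Ar C" "Cd C y = Prd C (Prd C A B) C'" for y
    by (rule Cmp_Cmp_eq[OF N(4)]) (simp_all add: N that)
  have "Leq P (Dm C ?a) (Rdx P ?a \<gamma>) (Rdx P ?a (Rdx P N (Rdx P ?q \<delta>)))"
    by (rule Rdx_mono) (use N in simp_all)
  then have "Leq P (Prd C A (Prd C B C')) (Rdx P ?a \<gamma>) (Rdx P (Cmp C ?q (Cmp C N ?a)) \<delta>)"
    by (simp add: N Nl)
  then show ?thesis by (rule exleI[rotated -1]) (simp_all add: N Nl assoc_def)
qed

lemma Pex_exists_val:
  assumes A: "A \<in> Ob C" and B: "B \<in> Ob C" and C': "C' \<in> Ob C"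
    and \<gamma>: "\<gamma> \<in> Car P (Prd C (Prd C A B) C')"
  shows "is_exists_val C (Pex C P) A B (cls (Prd C A B) C' \<gamma>) (cls A (Prd C B C') (Rdx P (assoc A B C') \<gamma>))"
  unfolding is_exists_val_def
proof (intro conjI ballI)
  show "cls A (Prd C B C') (Rdx P (assoc A B C') \<gamma>) \<in> Car (Pex C P) A"
    using A B C' \<gamma> by simp
  fix w assume "w \<in> Car (Pex C P) A"
  then obtain D \<delta> where D: "D \<in> Ob C" and \<delta>: "\<delta> \<in> Car P (Prd C A D)" and w: "w = cls A D \<delta>"
    by (rule Car_PexE)
  note ob[simp] = A B C' \<gamma> D \<delta>
  have q\<delta>: "Rdx P (times C (Pr1 C A B) (Idt C D)) \<delta> \<in> Car P (Prd C (Prd C A B) D)" by simp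
  have "Rdx (Pex C P) (Pr1 C A B) w = cls (Prd C A B) D (Rdx P (times C (Pr1 C A B) (Idt C D)) \<delta>)"
    unfolding w by (subst Rdx_Pex_cls) (simp_all del: times_eq)
  with q\<delta> show "Leq (Pex C P) A (cls A (Prd C B C') (Rdx P (assoc A B C') \<gamma>)) w \<longleftrightarrow>
     Leq (Pex C P) (Prd C A B) (cls (Prd C A B) C' \<gamma>) (Rdx (Pex C P) (Pr1 C A B) w)"
    unfolding w using exle_assocI[OF A B C' D \<gamma> \<delta>] exle_assocD[OF A B C' D \<gamma> \<delta>]
    by (auto simp: Leq_Pex_cls_iff simp del: times_eq)
qed

lemma exists_val_mono:
  assumes A: "A \<in> Ob C" and B: "B \<in> Ob C" "B' \<in> Ob C"
    and y: "y \<in> Car P (Prd C A B)" "y' \<in> Car P (Prd C A B')"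
    and z: "is_exists_val C P A B y z" and z': "is_exists_val C P A B' y' z'"
    and le: "exle C P A (B, y) (B', y')"
  shows "Leq P A z z'"
proof -
  have zc: "z \<in> Car P A" "z' \<in> Car P A" using z z' unfolding is_exists_val_def by auto
  have zz: "\<forall>w\<in>Car P A. Leq P A z w \<longleftrightarrow> Leq P (Prd C A B) y (Rdx P (Pr1 C A B) w)"
    using z unfolding is_exists_val_def by blast
  have zz': "\<forall>w\<in>Car P A. Leq P A z' w \<longleftrightarrow> Leq P (Prd C A B') y' (Rdx P (Pr1 C A B') w)"
    using z' unfolding is_exists_val_def by blast
  have y'z': "Leq P (Prd C A B') y' (Rdx P (Pr1 C A B') z')" using bspec[OF zz' zc(2)] zc A by simp
  obtain M where M: "M \<in> Ar C" "Dm C M = Prd C A B" "Cd C M = Prd C A B'"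
    "Cmp C (Pr1 C A B') M = Pr1 C A B" "Leq P (Prd C A B) y (Rdx P M y')"
    using exleE[OF le A B] by blast
  have "Leq P (Dm C M) (Rdx P M y') (Rdx P M (Rdx P (Pr1 C A B') z'))"
    by (rule Rdx_mono) (use M y'z' zc y A B in simp_all)
  moreover have "Rdx P M (Rdx P (Pr1 C A B') z') = Rdx P (Pr1 C A B) z'"
    using M zc A B by simp
  ultimately have "Leq P (Prd C A B) y (Rdx P (Pr1 C A B) z')"
    using Leq_trans[OF _ y(1) _ _ M(5)] M zc y A B by simp
  then show ?thesis using bspec[OF zz zc(2)] by simp
qed

lemma exle_Trm_iff:
  assumes A: "A \<in> Ob C" and D: "D \<in> Ob C" and \<delta>: "\<delta> \<in> Car P (Prd C A D)" and \<beta>: "\<beta> \<in> Car P A"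
  shows "exle C P A (D, \<delta>) (Trm C, Rdx P (Pr1 C A (Trm C)) \<beta>) \<longleftrightarrow> Leq P (Prd C A D) \<delta> (Rdx P (Pr1 C A D) \<beta>)"
proof
  assume "exle C P A (D, \<delta>) (Trm C, Rdx P (Pr1 C A (Trm C)) \<beta>)"
  then obtain M where M: "M \<in> Ar C" "Dm C M = Prd C A D" "Cd C M = Prd C A (Trm C)"
    "Cmp C (Pr1 C A (Trm C)) M = Pr1 C A D" "Leq P (Prd C A D) \<delta> (Rdx P M (Rdx P (Pr1 C A (Trm C)) \<beta>))"
    by (rule exleE) (simp_all add: A D)
  then show "Leq P (Prd C A D) \<delta> (Rdx P (Pr1 C A D) \<beta>)" using A \<beta> by simp
next
  assume "Leq P (Prd C A D) \<delta> (Rdx P (Pr1 C A D) \<beta>)"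
  then show "exle C P A (D, \<delta>) (Trm C, Rdx P (Pr1 C A (Trm C)) \<beta>)"
    by (intro exleI[where M = "pair C (Pr1 C A D) (to_Trm (Prd C A D))"]) (simp_all add: A D \<beta>)
qed

lemma eta_Car[simp]: "A \<in> Ob C \<Longrightarrow> \<alpha> \<in> Car P A \<Longrightarrow> eta C P A \<alpha> \<in> Car (Pex C P) A"
  unfolding eta_def by simp

lemma eta_mono:
  assumes A: "A \<in> Ob C" and "\<alpha> \<in> Car P A" "\<beta> \<in> Car P A" "Leq P A \<alpha> \<beta>"
  shows "Leq (Pex C P) A (eta C P A \<alpha>) (eta C P A \<beta>)"
proof -
  have "Leq P (Prd C A (Trm C)) (Rdx P (Pr1 C A (Trm C)) \<alpha>) (Rdx P (Pr1 C A (Trm C)) \<beta>)"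
    using Rdx_mono[of "Pr1 C A (Trm C)" \<alpha> \<beta>] assms by simp
  then show ?thesis
    unfolding eta_def using assms by (intro Leq_Pex_clsI) (simp_all add: exle_Trm_iff)
qed

lemma eta_Rdx:
  "f \<in> Ar C \<Longrightarrow> x \<in> Car P (Cd C f) \<Longrightarrow> eta C P (Dm C f) (Rdx P f x) = Rdx (Pex C P) f (eta C P (Cd C f) x)"
  unfolding eta_def by (subst Rdx_Pex_cls) simp_all

lemma eta_SD_1cell: "SD_1cell C P C (Pex C P) id id (eta C P)"
  unfolding SD_1cell_def
  by (simp add: id_functor id_preserves_products eta_mono eta_Rdx)

lemma mu_cls:
  assumes A: "A \<in> Ob C" and C': "C' \<in> Ob C" and C'': "C'' \<in> Ob C"
    and \<gamma>: "\<gamma> \<in> Car P (Prd C (Prd C A C') C'')"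
  shows "mu C P A (ex_cls C (Pex C P) A C' (cls (Prd C A C') C'' \<gamma>)) =
    cls A (Prd C C' C'') (Rdx P (assoc A C' C'') \<gamma>)"
proof -
  interpret Pex: slat_doctrine C "Pex C P" by (rule slat_doctrine_Pex)
  let ?\<Gamma> = "cls (Prd C A C') C'' \<gamma>"
  let ?z = "cls A (Prd C C' C'') (Rdx P (assoc A C' C'') \<gamma>)"
  have \<Gamma>: "?\<Gamma> \<in> Car (Pex C P) (Prd C A C')" using A C' C'' \<gamma> by simp
  have z: "is_exists_val C (Pex C P) A C' ?\<Gamma> ?z" by (rule Pex_exists_val[OF A C' C'' \<gamma>])
  have self: "(C', ?\<Gamma>) \<in> ex_cls C (Pex C P) A C' ?\<Gamma>" using A C' \<Gamma> by (simp add: Pex.cls_self)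
  show ?thesis unfolding mu_def
  proof (rule the_equality)
    show "\<exists>p\<in>ex_cls C (Pex C P) A C' ?\<Gamma>. is_exists_val C (Pex C P) A (fst p) (snd p) ?z"
      using self z by force
  next
    fix z' assume "\<exists>p\<in>ex_cls C (Pex C P) A C' ?\<Gamma>. is_exists_val C (Pex C P) A (fst p) (snd p) z'"
    then obtain B1 x1 where p: "(B1, x1) \<in> ex_cls C (Pex C P) A C' ?\<Gamma>"
      and z': "is_exists_val C (Pex C P) A B1 x1 z'" by auto
    have p': "B1 \<in> Ob C" "x1 \<in> Car (Pex C P) (Prd C A B1)"
      "exle C (Pex C P) A (C', ?\<Gamma>) (B1, x1)" "exle C (Pex C P) A (B1, x1) (C', ?\<Gamma>)"
      using p unfolding Pex.cls_iff by auto
    have "z' \<in> Car (Pex C P) A" "?z \<in> Car (Pex C P) A"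
      using z z' unfolding is_exists_val_def by auto
    moreover have "Leq (Pex C P) A z' ?z"
      by (rule Pex.exists_val_mono[OF A p'(1) C' p'(2) \<Gamma> z' z p'(4)])
    moreover have "Leq (Pex C P) A ?z z'"
      by (rule Pex.exists_val_mono[OF A C' p'(1) \<Gamma> p'(2) z z' p'(3)])
    ultimately show "z' = ?z" using A Pex.Leq_antisym by blast
  qed
qed

lemma Car_Pex_PexE:
  assumes "s \<in> Car (Pex C (Pex C P)) A"
  obtains C' C'' \<gamma> where "C' \<in> Ob C" "C'' \<in> Ob C" "\<gamma> \<in> Car P (Prd C (Prd C A C') C'')"
    "s = ex_cls C (Pex C P) A C' (cls (Prd C A C') C'' \<gamma>)"
proof -
  interpret Pex: slat_doctrine C "Pex C P" by (rule slat_doctrine_Pex)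
  obtain C' \<Gamma> where c: "C' \<in> Ob C" "\<Gamma> \<in> Car (Pex C P) (Prd C A C')" "s = ex_cls C (Pex C P) A C' \<Gamma>"
    using assms by (rule Pex.Car_PexE)
  obtain C'' \<gamma> where "C'' \<in> Ob C" "\<gamma> \<in> Car P (Prd C (Prd C A C') C'')" "\<Gamma> = cls (Prd C A C') C'' \<gamma>"
    using c(2) by (rule Car_PexE)
  with c show ?thesis using that by blast
qed

lemma mu_Car:
  assumes A: "A \<in> Ob C" and s: "s \<in> Car (Pex C (Pex C P)) A"
  shows "mu C P A s \<in> Car (Pex C P) A"
proof -
  obtain C' C'' \<gamma> where c: "C' \<in> Ob C" "C'' \<in> Ob C" "\<gamma> \<in> Car P (Prd C (Prd C A C') C'')"
    "s = ex_cls C (Pex C P) A C' (cls (Prd C A C') C'' \<gamma>)" using s by (rule Car_Pex_PexE)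
  then show ?thesis using A by (simp add: mu_cls)
qed

lemma mu_mono:
  assumes A: "A \<in> Ob C" and s: "s \<in> Car (Pex C (Pex C P)) A" and t: "t \<in> Car (Pex C (Pex C P)) A"
    and le: "Leq (Pex C (Pex C P)) A s t"
  shows "Leq (Pex C P) A (mu C P A s) (mu C P A t)"
proof -
  interpret Pex: slat_doctrine C "Pex C P" by (rule slat_doctrine_Pex)
  obtain C1 C1' \<gamma>1 where c1: "C1 \<in> Ob C" "C1' \<in> Ob C" "\<gamma>1 \<in> Car P (Prd C (Prd C A C1) C1')"
    "s = ex_cls C (Pex C P) A C1 (cls (Prd C A C1) C1' \<gamma>1)" using s by (rule Car_Pex_PexE)
  obtain C2 C2' \<gamma>2 where c2: "C2 \<in> Ob C" "C2' \<in> Ob C" "\<gamma>2 \<in> Car P (Prd C (Prd C A C2) C2')"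
    "t = ex_cls C (Pex C P) A C2 (cls (Prd C A C2) C2' \<gamma>2)" using t by (rule Car_Pex_PexE)
  have g1: "cls (Prd C A C1) C1' \<gamma>1 \<in> Car (Pex C P) (Prd C A C1)" using c1 A by simp
  have g2: "cls (Prd C A C2) C2' \<gamma>2 \<in> Car (Pex C P) (Prd C A C2)" using c2 A by simp
  have le': "exle C (Pex C P) A (C1, cls (Prd C A C1) C1' \<gamma>1) (C2, cls (Prd C A C2) C2' \<gamma>2)"
    using le unfolding c1(4) c2(4) by (rule Pex.Leq_Pex_clsD[OF _ A c1(1) g1 c2(1) g2])
  show ?thesis unfolding c1(4) c2(4) mu_cls[OF A c1(1-3)] mu_cls[OF A c2(1-3)]
    by (rule Pex.exists_val_mono[OF A c1(1) c2(1) g1 g2 _ _ le']; rule Pex_exists_val)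
      (simp_all add: A c1 c2)
qed

lemma mu_Rdx:
  assumes f: "f \<in> Ar C" and s: "s \<in> Car (Pex C (Pex C P)) (Cd C f)"
  shows "mu C P (Dm C f) (Rdx (Pex C (Pex C P)) f s) = Rdx (Pex C P) f (mu C P (Cd C f) s)"
proof -
  interpret Pex: slat_doctrine C "Pex C P" by (rule slat_doctrine_Pex)
  let ?A = "Cd C f" and ?A' = "Dm C f"
  have A[simp]: "?A \<in> Ob C" "?A' \<in> Ob C" using f by auto
  note f[simp]
  obtain C' C'' \<gamma> where c[simp]: "C' \<in> Ob C" "C'' \<in> Ob C" "\<gamma> \<in> Car P (Prd C (Prd C ?A C') C'')"
    and sc: "s = ex_cls C (Pex C P) ?A C' (cls (Prd C ?A C') C'' \<gamma>)" using s by (rule Car_Pex_PexE)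
  let ?fC = "times C f (Idt C C')"
  have "Rdx (Pex C (Pex C P)) f s = ex_cls C (Pex C P) ?A' C' (Rdx (Pex C P) ?fC (cls (Prd C ?A C') C'' \<gamma>))"
    unfolding sc by (rule Pex.Rdx_Pex_cls) simp_all
  also have "Rdx (Pex C P) ?fC (cls (Prd C ?A C') C'' \<gamma>) =
      cls (Prd C ?A' C') C'' (Rdx P (times C ?fC (Idt C C'')) \<gamma>)"
    by (subst Rdx_Pex_cls) simp_all
  finally have lhs: "mu C P ?A' (Rdx (Pex C (Pex C P)) f s) =
      cls ?A' (Prd C C' C'') (Rdx P (assoc ?A' C' C'') (Rdx P (times C ?fC (Idt C C'')) \<gamma>))"
    by (simp add: mu_cls)
  have rhs: "Rdx (Pex C P) f (mu C P ?A s) =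
      cls ?A' (Prd C C' C'') (Rdx P (times C f (Idt C (Prd C C' C''))) (Rdx P (assoc ?A C' C'') \<gamma>))"
    unfolding sc mu_cls[OF A(1) c] by (subst Rdx_Pex_cls) simp_all
  have "Cmp C (times C ?fC (Idt C C'')) (assoc ?A' C' C'') =
      Cmp C (assoc ?A C' C'') (times C f (Idt C (Prd C C' C'')))"
    by (simp add: assoc_def)
  then show ?thesis unfolding lhs rhs by simp
qed

lemma mu_SD_1cell: "SD_1cell C (Pex C (Pex C P)) C (Pex C P) id id (mu C P)"
  unfolding SD_1cell_def
  by (simp add: id_functor id_preserves_products mu_Car mu_mono mu_Rdx)

end

section \<open>Universal quantification in the completion\<close>

locale universal_doctrine = slat_doctrine +
  assumes exponents: "has_exponents C" and universal: "universal C P"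
begin

definition forall_pr where
  "forall_pr = (SOME u. (\<forall>A\<in>Ob C. \<forall>B\<in>Ob C. is_forall C P A B (u A B)) \<and>
     (\<forall>A A' B f. f \<in> hom C A' A \<longrightarrow> B \<in> Ob C \<longrightarrow>
        (\<forall>y\<in>Car P (Prd C A B). Rdx P f (u A B y) = u A' B (Rdx P (times C f (Idt C B)) y))))"

lemma forall_pr_spec:
  "(\<forall>A\<in>Ob C. \<forall>B\<in>Ob C. is_forall C P A B (forall_pr A B)) \<and>
   (\<forall>A A' B f. f \<in> hom C A' A \<longrightarrow> B \<in> Ob C \<longrightarrow>
      (\<forall>y\<in>Car P (Prd C A B). Rdx P f (forall_pr A B y) = forall_pr A' B (Rdx P (times C f (Idt C B)) y)))"
  unfolding forall_pr_def using universal unfolding universal_def by (rule someI_ex[OF conjunct2])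

lemma is_forall_forall_pr: "A \<in> Ob C \<Longrightarrow> B \<in> Ob C \<Longrightarrow> is_forall C P A B (forall_pr A B)"
  using forall_pr_spec by blast

lemma forall_val_forall_pr:
  "A \<in> Ob C \<Longrightarrow> B \<in> Ob C \<Longrightarrow> y \<in> Car P (Prd C A B) \<Longrightarrow> is_forall_val C P A B y (forall_pr A B y)"
  using is_forall_forall_pr unfolding is_forall_iff by blast

lemma forall_pr_Car[simp]: "A \<in> Ob C \<Longrightarrow> B \<in> Ob C \<Longrightarrow> y \<in> Car P (Prd C A B) \<Longrightarrow> forall_pr A B y \<in> Car P A"
  using is_forall_forall_pr unfolding is_forall_def by blast

lemma forall_pr_adj: "A \<in> Ob C \<Longrightarrow> B \<in> Ob C \<Longrightarrow> x \<in> Car P A \<Longrightarrow> y \<in> Car P (Prd C A B) \<Longrightarrow>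
    Leq P (Prd C A B) (Rdx P (Pr1 C A B) x) y \<longleftrightarrow> Leq P A x (forall_pr A B y)"
  using is_forall_forall_pr unfolding is_forall_def by blast

lemma forall_pr_Rdx: "f \<in> Ar C \<Longrightarrow> Cd C f = A \<Longrightarrow> B \<in> Ob C \<Longrightarrow> y \<in> Car P (Prd C A B) \<Longrightarrow>
    Rdx P f (forall_pr A B y) = forall_pr (Dm C f) B (Rdx P (times C f (Idt C B)) y)"
  using forall_pr_spec unfolding hom_iff by blast

lemma forall_pr_eq:
  "is_forall_val C P A B y t \<Longrightarrow> A \<in> Ob C \<Longrightarrow> B \<in> Ob C \<Longrightarrow> y \<in> Car P (Prd C A B) \<Longrightarrow> forall_pr A B y = t"
  using is_forall_eq[OF is_forall_forall_pr] by blast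

lemma weak_exponential_ex:
  assumes "B \<in> Ob C" "D \<in> Ob C"
  obtains E ev where "weak_exponential C B D E ev"
  using exponents assms is_exponential_weak unfolding has_exponents_def by blast

lemma exponential_ex:
  assumes "B \<in> Ob C" "D \<in> Ob C"
  obtains E ev where "is_exponential C B D E ev"
  using exponents assms unfolding has_exponents_def by blast

text \<open>A witnessing map \<open>(A \<times> B) \<times> D \<rightarrow> C'\<close> for \<open>\<gamma>\<close> is, after currying, a map
  \<open>A \<times> D \<rightarrow> E\<close> witnessing the Skolemised formula, and conversely.\<close>
lemma exle_skolemI:
  assumes A: "A \<in> Ob C" and B: "B \<in> Ob C" and C': "C' \<in> Ob C" and D: "D \<in> Ob C"
    and \<gamma>: "\<gamma> \<in> Car P (Prd C (Prd C A B) C')" and \<delta>: "\<delta> \<in> Car P (Prd C A D)"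
    and ex: "weak_exponential C B C' E ev"
    and le: "exle C P (Prd C A B) (D, Rdx P (times C (Pr1 C A B) (Idt C D)) \<delta>) (C', \<gamma>)"
  shows "exle C P A (D, \<delta>) (E, forall_pr (Prd C A E) B (Rdx P (skolem_map A B E ev) \<gamma>))"
proof -
  note e[simp] = weak_exponentialD[OF ex] and k[simp] = skolem_map_simps[OF ex A B]
    and ob[simp] = A B C' D \<gamma> \<delta>
  let ?k = "skolem_map A B E ev" and ?q = "times C (Pr1 C A B) (Idt C D)"
  obtain M where M: "M \<in> Ar C" "Dm C M = Prd C (Prd C A B) D" "Cd C M = Prd C (Prd C A B) C'"
    "Cmp C (Pr1 C (Prd C A B) C') M = Pr1 C (Prd C A B) D"
    "Leq P (Prd C (Prd C A B) D) (Rdx P ?q \<delta>) (Rdx P M \<gamma>)"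
    using le by (rule exleE) simp_all
  let ?\<sigma> = "pair C (pair C (Cmp C (Pr1 C A D) (Pr1 C (Prd C A D) B)) (Pr2 C (Prd C A D) B))
                (Cmp C (Pr2 C A D) (Pr1 C (Prd C A D) B))"
  obtain g where g: "g \<in> Ar C" "Dm C g = Prd C A D" "Cd C g = E"
    "Cmp C ev (pair C (Cmp C g (Pr1 C (Prd C A D) B)) (Pr2 C (Prd C A D) B)) =
     Cmp C (Pr2 C (Prd C A B) C') (Cmp C M ?\<sigma>)"
    by (rule weak_exponential_transpose[OF ex, where h = "Cmp C (Pr2 C (Prd C A B) C') (Cmp C M ?\<sigma>)"])
      (simp_all add: M)
  let ?N = "pair C (Pr1 C A D) g"
  have Ml: "Cmp C (Pr1 C (Prd C A B) C') (Cmp C M y) = Cmp C (Pr1 C (Prd C A B) D) y"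
    if "y \<in> Ar C" "Cd C y = Prd C (Prd C A B) D" for y
    by (rule Cmp_Cmp_eq[OF M(4)]) (simp_all add: M that)
  have curry: "Cmp C M ?\<sigma> = Cmp C ?k (times C ?N (Idt C B))"
    by (rule Prd_arrow_eqI[of _ _ "Prd C A B" C']) (simp_all add: M g Ml skolem_map_def)
  have "Leq P (Dm C ?\<sigma>) (Rdx P ?\<sigma> (Rdx P ?q \<delta>)) (Rdx P ?\<sigma> (Rdx P M \<gamma>))"
    by (rule Rdx_mono) (use M in simp_all)
  also have "Rdx P ?\<sigma> (Rdx P M \<gamma>) = Rdx P (Cmp C M ?\<sigma>) \<gamma>"
    by (rule Rdx_Rdx) (simp_all add: M)
  also have "\<dots> = Rdx P (times C ?N (Idt C B)) (Rdx P ?k \<gamma>)"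
    unfolding curry by (rule Rdx_Rdx[symmetric]) (simp_all add: g)
  finally have "Leq P (Prd C (Prd C A D) B) (Rdx P (Pr1 C (Prd C A D) B) \<delta>)
      (Rdx P (times C ?N (Idt C B)) (Rdx P ?k \<gamma>))"
    by simp
  moreover have "Rdx P (times C ?N (Idt C B)) (Rdx P ?k \<gamma>) \<in> Car P (Prd C (Prd C A D) B)"
    using g by simp
  ultimately have "Leq P (Prd C A D) \<delta> (Rdx P ?N (forall_pr (Prd C A E) B (Rdx P ?k \<gamma>)))"
    using g by (simp add: forall_pr_adj forall_pr_Rdx del: times_eq)
  then show ?thesis by (rule exleI[rotated -1]) (simp_all add: g)
qed

lemma exle_skolemD:
  assumes A: "A \<in> Ob C" and B: "B \<in> Ob C" and C': "C' \<in> Ob C" and D: "D \<in> Ob C"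
    and \<gamma>: "\<gamma> \<in> Car P (Prd C (Prd C A B) C')" and \<delta>: "\<delta> \<in> Car P (Prd C A D)"
    and ex: "weak_exponential C B C' E ev"
    and le: "exle C P A (D, \<delta>) (E, forall_pr (Prd C A E) B (Rdx P (skolem_map A B E ev) \<gamma>))"
  shows "exle C P (Prd C A B) (D, Rdx P (times C (Pr1 C A B) (Idt C D)) \<delta>) (C', \<gamma>)"
proof -
  note e[simp] = weak_exponentialD[OF ex] and k[simp] = skolem_map_simps[OF ex A B]
    and ob[simp] = A B C' D \<gamma> \<delta>
  let ?k = "skolem_map A B E ev" and ?q = "times C (Pr1 C A B) (Idt C D)"
  obtain N where N: "N \<in> Ar C" "Dm C N = Prd C A D" "Cd C N = Prd C A E"
    "Cmp C (Pr1 C A E) N = Pr1 C A D" "Leq P (Prd C A D) \<delta> (Rdx P N (forall_pr (Prd C A E) B (Rdx P ?k \<gamma>)))"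
    using le by (rule exleE) simp_all
  have Nl: "Cmp C (Pr1 C A E) (Cmp C N y) = Cmp C (Pr1 C A D) y" if "y \<in> Ar C" "Cd C y = Prd C A D" for y
    by (rule Cmp_Cmp_eq[OF N(4)]) (simp_all add: N that)
  have "Rdx P (times C N (Idt C B)) (Rdx P ?k \<gamma>) \<in> Car P (Prd C (Prd C A D) B)"
    using N by simp
  with N(5) have L: "Leq P (Prd C (Prd C A D) B) (Rdx P (Pr1 C (Prd C A D) B) \<delta>)
      (Rdx P (times C N (Idt C B)) (Rdx P ?k \<gamma>))"
    using N by (simp add: forall_pr_adj forall_pr_Rdx del: times_eq)
  let ?\<sigma> = "pair C (pair C (Cmp C (Pr1 C A B) (Pr1 C (Prd C A B) D)) (Pr2 C (Prd C A B) D))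
                (Cmp C (Pr2 C A B) (Pr1 C (Prd C A B) D))"
  let ?M = "Cmp C ?k (Cmp C (times C N (Idt C B)) ?\<sigma>)"
  have "Leq P (Dm C ?\<sigma>) (Rdx P ?\<sigma> (Rdx P (Pr1 C (Prd C A D) B) \<delta>))
      (Rdx P ?\<sigma> (Rdx P (times C N (Idt C B)) (Rdx P ?k \<gamma>)))"
    by (rule Rdx_mono) (use N L in simp_all)
  then have "Leq P (Prd C (Prd C A B) D) (Rdx P ?q \<delta>) (Rdx P ?M \<gamma>)"
    using N by simp
  then show ?thesis
    by (rule exleI[rotated -1]) (simp_all add: N Nl skolem_map_def)
qed

lemma Pex_forall_val:
  assumes A: "A \<in> Ob C" and B: "B \<in> Ob C" and C': "C' \<in> Ob C"
    and \<gamma>: "\<gamma> \<in> Car P (Prd C (Prd C A B) C')" and ex: "weak_exponential C B C' E ev"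
  shows "is_forall_val C (Pex C P) A B (cls (Prd C A B) C' \<gamma>)
    (cls A E (forall_pr (Prd C A E) B (Rdx P (skolem_map A B E ev) \<gamma>)))"
  unfolding is_forall_val_def
proof (intro conjI ballI)
  note e[simp] = weak_exponentialD[OF ex] and k[simp] = skolem_map_simps[OF ex A B]
  show "cls A E (forall_pr (Prd C A E) B (Rdx P (skolem_map A B E ev) \<gamma>)) \<in> Car (Pex C P) A"
    using A B \<gamma> by simp
  fix x assume "x \<in> Car (Pex C P) A"
  then obtain D \<delta> where D: "D \<in> Ob C" and \<delta>: "\<delta> \<in> Car P (Prd C A D)" and x: "x = cls A D \<delta>"
    by (rule Car_PexE)
  note ob[simp] = A B C' \<gamma> D \<delta>
  have q\<delta>: "Rdx P (times C (Pr1 C A B) (Idt C D)) \<delta> \<in> Car P (Prd C (Prd C A B) D)" by simp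
  have "Rdx (Pex C P) (Pr1 C A B) x = cls (Prd C A B) D (Rdx P (times C (Pr1 C A B) (Idt C D)) \<delta>)"
    unfolding x by (subst Rdx_Pex_cls) (simp_all del: times_eq)
  with q\<delta> show "Leq (Pex C P) (Prd C A B) (Rdx (Pex C P) (Pr1 C A B) x) (cls (Prd C A B) C' \<gamma>) \<longleftrightarrow>
      Leq (Pex C P) A x (cls A E (forall_pr (Prd C A E) B (Rdx P (skolem_map A B E ev) \<gamma>)))"
    unfolding x using exle_skolemI[OF A B C' D \<gamma> \<delta> ex] exle_skolemD[OF A B C' D \<gamma> \<delta> ex]
    by (auto simp: Leq_Pex_cls_iff simp del: times_eq)
qed

definition Pex_forall where
  "Pex_forall A B s = (SOME t. is_forall_val C (Pex C P) A B s t)"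

lemma Pex_forall_cls:
  assumes A: "A \<in> Ob C" and B: "B \<in> Ob C" and C': "C' \<in> Ob C"
    and \<gamma>: "\<gamma> \<in> Car P (Prd C (Prd C A B) C')" and ex: "weak_exponential C B C' E ev"
  shows "Pex_forall A B (cls (Prd C A B) C' \<gamma>) = cls A E (forall_pr (Prd C A E) B (Rdx P (skolem_map A B E ev) \<gamma>))"
proof -
  interpret Pex: slat_doctrine C "Pex C P" by (rule slat_doctrine_Pex)
  note val = Pex_forall_val[OF assms]
  then have "is_forall_val C (Pex C P) A B (cls (Prd C A B) C' \<gamma>) (Pex_forall A B (cls (Prd C A B) C' \<gamma>))"
    unfolding Pex_forall_def by (rule someI)
  then show ?thesis using val A by (rule Pex.forall_val_unique)
qed

lemma is_forall_Pex_forall: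
  assumes A: "A \<in> Ob C" and B: "B \<in> Ob C"
  shows "is_forall C (Pex C P) A B (Pex_forall A B)"
  unfolding is_forall_iff
proof
  fix y assume "y \<in> Car (Pex C P) (Prd C A B)"
  then obtain C' \<gamma> where c: "C' \<in> Ob C" "\<gamma> \<in> Car P (Prd C (Prd C A B) C')" "y = cls (Prd C A B) C' \<gamma>"
    by (rule Car_PexE)
  obtain E ev where ex: "weak_exponential C B C' E ev" using weak_exponential_ex[OF B c(1)] .
  show "is_forall_val C (Pex C P) A B y (Pex_forall A B y)"
    unfolding c(3) Pex_forall_cls[OF A B c(1,2) ex] by (rule Pex_forall_val[OF A B c(1,2) ex])
qed

lemma Pex_forall_Rdx:
  assumes f: "f \<in> Ar C" "Cd C f = A" and B: "B \<in> Ob C" and y: "y \<in> Car (Pex C P) (Prd C A B)"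
  shows "Rdx (Pex C P) f (Pex_forall A B y) = Pex_forall (Dm C f) B (Rdx (Pex C P) (times C f (Idt C B)) y)"
proof -
  have A[simp]: "A \<in> Ob C" "Dm C f \<in> Ob C" using f by auto
  note f[simp] B[simp]
  obtain C' \<gamma> where c[simp]: "C' \<in> Ob C" "\<gamma> \<in> Car P (Prd C (Prd C A B) C')" and y: "y = cls (Prd C A B) C' \<gamma>"
    using y by (rule Car_PexE)
  obtain E ev where ex: "weak_exponential C B C' E ev" using weak_exponential_ex[OF B c(1)] .
  note e[simp] = weak_exponentialD[OF ex] and k[simp] = skolem_map_simps[OF ex A(1) B] skolem_map_simps[OF ex A(2) B]
  let ?A' = "Dm C f" and ?fE = "times C f (Idt C E)" and ?fB = "times C f (Idt C B)"
  have "Rdx (Pex C P) f (Pex_forall A B y) =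
      cls ?A' E (Rdx P ?fE (forall_pr (Prd C A E) B (Rdx P (skolem_map A B E ev) \<gamma>)))"
    unfolding y Pex_forall_cls[OF A(1) B c ex] by (subst Rdx_Pex_cls) simp_all
  also have "\<dots> = cls ?A' E (forall_pr (Prd C ?A' E) B (Rdx P (times C ?fE (Idt C B)) (Rdx P (skolem_map A B E ev) \<gamma>)))"
    by (subst forall_pr_Rdx) simp_all
  also have "\<dots> = cls ?A' E (forall_pr (Prd C ?A' E) B (Rdx P (skolem_map ?A' B E ev) (Rdx P (times C ?fB (Idt C C')) \<gamma>)))"
  proof -
    have "Cmp C (skolem_map A B E ev) (times C ?fE (Idt C B)) = Cmp C (times C ?fB (Idt C C')) (skolem_map ?A' B E ev)"
      by (simp add: skolem_map_def)
    then show ?thesis by simp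
  qed
  also have "\<dots> = Pex_forall ?A' B (cls (Prd C ?A' B) C' (Rdx P (times C ?fB (Idt C C')) \<gamma>))"
    by (subst Pex_forall_cls[OF A(2) B c(1) _ ex]) simp_all
  also have "\<dots> = Pex_forall ?A' B (Rdx (Pex C P) ?fB y)"
    unfolding y by (subst Rdx_Pex_cls) simp_all
  finally show ?thesis .
qed

lemma universal_Pex: "universal C (Pex C P)"
  unfolding universal_def
proof (intro conjI exI[of _ Pex_forall] ballI allI impI)
  fix A A' B f y assume "f \<in> hom C A' A" "B \<in> Ob C" "y \<in> Car (Pex C P) (Prd C A B)"
  then show "Rdx (Pex C P) f (Pex_forall A B y) = Pex_forall A' B (Rdx (Pex C P) (times C f (Idt C B)) y)"
    using Pex_forall_Rdx by (auto simp: hom_iff)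
qed (simp_all add: Pex_doctrine is_forall_Pex_forall)

lemma universal_doctrine_Pex: "universal_doctrine C (Pex C P)"
  using slat_doctrine_Pex exponents universal_Pex
  by (simp add: universal_doctrine_def universal_doctrine_axioms_def)

lemma UDexp_obj_Pex: "UDexp_obj C (Pex C P)"
  using category fin_products exponents Pex_doctrine universal_Pex
  by (simp add: UDexp_obj_def SDexp_obj_def)

lemma forall_val_eta:
  assumes A: "A \<in> Ob C" and B: "B \<in> Ob C" and y: "y \<in> Car P (Prd C A B)"
  shows "is_forall_val C (Pex C P) A B (eta C P (Prd C A B) y) (eta C P A (forall_pr A B y))"
proof -
  let ?ev = "to_Trm (Prd C (Trm C) B)"
  have ex: "weak_exponential C B (Trm C) (Trm C) ?ev" by (rule weak_exponential_Trm[OF B])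
  note ob[simp] = A B y and k[simp] = skolem_map_simps[OF ex A B]
  have "Cmp C (Pr1 C (Prd C A B) (Trm C)) (skolem_map A B (Trm C) ?ev) = times C (Pr1 C A (Trm C)) (Idt C B)"
    by (simp add: skolem_map_def)
  then have "Rdx P (skolem_map A B (Trm C) ?ev) (Rdx P (Pr1 C (Prd C A B) (Trm C)) y) =
      Rdx P (times C (Pr1 C A (Trm C)) (Idt C B)) y"
    by simp
  moreover have "is_forall_val C (Pex C P) A B (eta C P (Prd C A B) y)
      (cls A (Trm C) (forall_pr (Prd C A (Trm C)) B
        (Rdx P (skolem_map A B (Trm C) ?ev) (Rdx P (Pr1 C (Prd C A B) (Trm C)) y))))"
    unfolding eta_def by (rule Pex_forall_val[OF A B Trm_Ob _ ex]) simp
  ultimately show ?thesis unfolding eta_def by (simp add: forall_pr_Rdx)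
qed

lemma eta_preserves_forall: "preserves_forall C P C (Pex C P) id id (eta C P)"
  unfolding preserves_forall_def
proof (intro allI impI ballI)
  interpret Pex: slat_doctrine C "Pex C P" by (rule slat_doctrine_Pex)
  fix uP uR A B y
  assume uP: "\<forall>A\<in>Ob C. \<forall>B\<in>Ob C. is_forall C P A B (uP A B)"
    and uR: "\<forall>A\<in>Ob C. \<forall>B\<in>Ob C. is_forall C (Pex C P) A B (uR A B)"
    and A: "A \<in> Ob C" and B: "B \<in> Ob C" and y: "y \<in> Car P (Prd C A B)"
  have "uP A B y = forall_pr A B y"
    using is_forall_eq[OF _ forall_val_forall_pr] uP A B y by blast
  moreover have "uR A B (eta C P (Prd C A B) y) = eta C P A (forall_pr A B y)"
    using Pex.is_forall_eq[OF _ forall_val_eta] uR A B y by simp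
  ultimately show "eta C P A (uP A B y) =
      uR (id A) (id B) (Rdx (Pex C P) (inv_ar C (cmpr C C id id A B)) (eta C P (Prd C A B) y))"
    using A B y by (simp add: Pex_Rdx_Idt)
qed

lemma eta_UDexp_1cell: "UDexp_1cell C P C (Pex C P) id id (eta C P)"
  using eta_SD_1cell id_preserves_exponents eta_preserves_forall
  by (simp add: UDexp_1cell_def SDexp_1cell_def)

lemma Pex_Pex_forall_cls:
  assumes u: "is_forall C (Pex C (Pex C P)) A B u" and A: "A \<in> Ob C" and B: "B \<in> Ob C"
    and C': "C' \<in> Ob C" and C'': "C'' \<in> Ob C" and \<gamma>: "\<gamma> \<in> Car P (Prd C (Prd C (Prd C A B) C') C'')"
    and ex1: "weak_exponential C B C' E ev1" and ex2: "weak_exponential C B C'' G ev2"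
  shows "u (ex_cls C (Pex C P) (Prd C A B) C' (cls (Prd C (Prd C A B) C') C'' \<gamma>)) =
    ex_cls C (Pex C P) A E (cls (Prd C A E) G (forall_pr (Prd C (Prd C A E) G) B
      (Rdx P (skolem_map (Prd C A E) B G ev2) (Rdx P (times C (skolem_map A B E ev1) (Idt C C'')) \<gamma>))))"
proof -
  interpret Pex: universal_doctrine C "Pex C P" by (rule universal_doctrine_Pex)
  note e1[simp] = weak_exponentialD[OF ex1] and ob[simp] = A B C' C'' \<gamma>
  note k1[simp] = skolem_map_simps[OF ex1 A B]
  let ?\<Gamma> = "cls (Prd C (Prd C A B) C') C'' \<gamma>"
  let ?\<Theta> = "cls (Prd C (Prd C A E) B) C'' (Rdx P (times C (skolem_map A B E ev1) (Idt C C'')) \<gamma>)"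
  have \<Gamma>: "?\<Gamma> \<in> Car (Pex C P) (Prd C (Prd C A B) C')" by simp
  have "u (ex_cls C (Pex C P) (Prd C A B) C' ?\<Gamma>) =
      ex_cls C (Pex C P) A E (Pex.forall_pr (Prd C A E) B (Rdx (Pex C P) (skolem_map A B E ev1) ?\<Gamma>))"
    by (rule slat_doctrine.is_forall_eq[OF Pex.slat_doctrine_Pex u Pex.Pex_forall_val[OF A B C' \<Gamma> ex1]])
      (simp_all add: \<Gamma>)
  also have "Rdx (Pex C P) (skolem_map A B E ev1) ?\<Gamma> = ?\<Theta>"
    by (subst Rdx_Pex_cls) simp_all
  also have "Pex.forall_pr (Prd C A E) B ?\<Theta> = cls (Prd C A E) G (forall_pr (Prd C (Prd C A E) G) B
      (Rdx P (skolem_map (Prd C A E) B G ev2) (Rdx P (times C (skolem_map A B E ev1) (Idt C C'')) \<gamma>)))"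
    by (rule Pex.forall_pr_eq[OF Pex_forall_val[OF _ B C'' _ ex2]]) simp_all
  finally show ?thesis .
qed

lemma forall_val_mu:
  assumes u: "is_forall C (Pex C (Pex C P)) A B u" and A: "A \<in> Ob C" and B: "B \<in> Ob C"
    and y: "y \<in> Car (Pex C (Pex C P)) (Prd C A B)"
  shows "is_forall_val C (Pex C P) A B (mu C P (Prd C A B) y) (mu C P A (u y))"
proof -
  obtain C' C'' \<gamma> where c: "C' \<in> Ob C" "C'' \<in> Ob C" "\<gamma> \<in> Car P (Prd C (Prd C (Prd C A B) C') C'')"
    and y: "y = ex_cls C (Pex C P) (Prd C A B) C' (cls (Prd C (Prd C A B) C') C'' \<gamma>)"
    using y by (rule Car_Pex_PexE)
  obtain E ev1 where ex1: "weak_exponential C B C' E ev1" using weak_exponential_ex[OF B c(1)] .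
  obtain G ev2 where ex2: "weak_exponential C B C'' G ev2" using weak_exponential_ex[OF B c(2)] .
  let ?ev = "pair C (Cmp C ev1 (times C (Pr1 C E G) (Idt C B))) (Cmp C ev2 (times C (Pr2 C E G) (Idt C B)))"
  note ex12 = weak_exponential_Prd[OF ex1 ex2 B]
  note e1[simp] = weak_exponentialD[OF ex1] and e2[simp] = weak_exponentialD[OF ex2]
    and ob[simp] = A B c and k[simp] = skolem_map_simps[OF ex1 A B] skolem_map_simps[OF ex2 _ B]
  let ?\<psi> = "Rdx P (skolem_map (Prd C A E) B G ev2) (Rdx P (times C (skolem_map A B E ev1) (Idt C C'')) \<gamma>)"
  have "mu C P A (u y) = cls A (Prd C E G) (Rdx P (assoc A E G) (forall_pr (Prd C (Prd C A E) G) B ?\<psi>))"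
    unfolding y Pex_Pex_forall_cls[OF u A B c ex1 ex2] by (rule mu_cls) simp_all
  also have "\<dots> = cls A (Prd C E G) (forall_pr (Prd C A (Prd C E G)) B (Rdx P (times C (assoc A E G) (Idt C B)) ?\<psi>))"
    by (subst forall_pr_Rdx) simp_all
  also have "Rdx P (times C (assoc A E G) (Idt C B)) ?\<psi> =
      Rdx P (Cmp C (times C (skolem_map A B E ev1) (Idt C C''))
        (Cmp C (skolem_map (Prd C A E) B G ev2) (times C (assoc A E G) (Idt C B)))) \<gamma>"
    by simp
  also have "\<dots> = Rdx P (Cmp C (assoc (Prd C A B) C' C'') (skolem_map A B (Prd C E G) ?ev)) \<gamma>"
    by (simp only: skolem_map_Prd[OF ex1 ex2 A B])
  also have "\<dots> = Rdx P (skolem_map A B (Prd C E G) ?ev) (Rdx P (assoc (Prd C A B) C' C'') \<gamma>)"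
    by (rule Rdx_Rdx[symmetric]) (use skolem_map_simps[OF ex12 A B] in simp_all)
  finally have "mu C P A (u y) = cls A (Prd C E G) (forall_pr (Prd C A (Prd C E G)) B
      (Rdx P (skolem_map A B (Prd C E G) ?ev) (Rdx P (assoc (Prd C A B) C' C'') \<gamma>)))" .
  moreover have "is_forall_val C (Pex C P) A B (mu C P (Prd C A B) y) (cls A (Prd C E G) (forall_pr (Prd C A (Prd C E G)) B
      (Rdx P (skolem_map A B (Prd C E G) ?ev) (Rdx P (assoc (Prd C A B) C' C'') \<gamma>))))"
    unfolding y mu_cls[OF Prd_Ob[OF A B] c] by (rule Pex_forall_val[OF A B Prd_Ob[OF c(1,2)] _ ex12]) simp
  ultimately show ?thesis by simp
qed

lemma mu_preserves_forall: "preserves_forall C (Pex C (Pex C P)) C (Pex C P) id id (mu C P)"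
  unfolding preserves_forall_def
proof (intro allI impI ballI)
  interpret Pex: slat_doctrine C "Pex C P" by (rule slat_doctrine_Pex)
  fix uP uR A B y
  assume uP: "\<forall>A\<in>Ob C. \<forall>B\<in>Ob C. is_forall C (Pex C (Pex C P)) A B (uP A B)"
    and uR: "\<forall>A\<in>Ob C. \<forall>B\<in>Ob C. is_forall C (Pex C P) A B (uR A B)"
    and A: "A \<in> Ob C" and B: "B \<in> Ob C" and y: "y \<in> Car (Pex C (Pex C P)) (Prd C A B)"
  have "uR A B (mu C P (Prd C A B) y) = mu C P A (uP A B y)"
    using Pex.is_forall_eq[OF _ forall_val_mu] uR uP A B y mu_Car by simp
  then show "mu C P A (uP A B y) =
      uR (id A) (id B) (Rdx (Pex C P) (inv_ar C (cmpr C C id id A B)) (mu C P (Prd C A B) y))"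
    using A B y by (simp add: Pex_Rdx_Idt mu_Car)
qed

lemma mu_UDexp_1cell: "UDexp_1cell C (Pex C (Pex C P)) C (Pex C P) id id (mu C P)"
  using mu_SD_1cell id_preserves_exponents mu_preserves_forall
  by (simp add: UDexp_1cell_def SDexp_1cell_def)

end

section \<open>The completion of a 1-cell\<close>

locale sd_1cell = c: slat_doctrine C P + d: slat_doctrine D R
  for C :: "('o,'a,'z) ccat_scheme" and P :: "('a,'o,'e) pdoc"
  and D :: "('o2,'a2,'z2) ccat_scheme" and R :: "('a2,'o2,'e2) pdoc" +
  fixes Fo :: "'o \<Rightarrow> 'o2" and Fa :: "'a \<Rightarrow> 'a2" and b :: "'o \<Rightarrow> 'e \<Rightarrow> 'e2"
  assumes SD_1cell: "SD_1cell C P D R Fo Fa b"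
begin

lemma F_functor: "is_functor C D Fo Fa" and F_preserves_products: "preserves_products C D Fo Fa"
  using SD_1cell unfolding SD_1cell_def by blast+

lemma b_Car[simp]: "A \<in> Ob C \<Longrightarrow> x \<in> Car P A \<Longrightarrow> b A x \<in> Car R (Fo A)"
  using SD_1cell unfolding SD_1cell_def by blast
lemma b_mono: "A \<in> Ob C \<Longrightarrow> x \<in> Car P A \<Longrightarrow> y \<in> Car P A \<Longrightarrow> Leq P A x y \<Longrightarrow> Leq R (Fo A) (b A x) (b A y)"
  using SD_1cell unfolding SD_1cell_def by blast
lemma b_Rdx: "f \<in> Ar C \<Longrightarrow> x \<in> Car P (Cd C f) \<Longrightarrow> b (Dm C f) (Rdx P f x) = Rdx R (Fa f) (b (Cd C f) x)"
  using SD_1cell unfolding SD_1cell_def by blast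

lemma F_Ob[simp]: "X \<in> Ob C \<Longrightarrow> Fo X \<in> Ob D"
  using F_functor unfolding is_functor_def by blast
lemma F_hom: "f \<in> Ar C \<Longrightarrow> Fa f \<in> hom D (Fo (Dm C f)) (Fo (Cd C f))"
  using F_functor unfolding is_functor_def by blast
lemma F_Ar[simp]: "f \<in> Ar C \<Longrightarrow> Fa f \<in> Ar D"
  using F_hom by (simp add: hom_def)
lemma Dm_F[simp]: "f \<in> Ar C \<Longrightarrow> Dm D (Fa f) = Fo (Dm C f)"
  using F_hom by (simp add: hom_def)
lemma Cd_F[simp]: "f \<in> Ar C \<Longrightarrow> Cd D (Fa f) = Fo (Cd C f)"
  using F_hom by (simp add: hom_def)
lemma F_Idt[simp]: "X \<in> Ob C \<Longrightarrow> Fa (Idt C X) = Idt D (Fo X)"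
  using F_functor unfolding is_functor_def by blast
lemma F_Cmp[simp]:
  assumes "f \<in> Ar C" "g \<in> Ar C" "Cd C f = Dm C g"
  shows "Fa (Cmp C g f) = Cmp D (Fa g) (Fa f)"
proof -
  have "f \<in> hom C (Dm C f) (Cd C f)" "g \<in> hom C (Cd C f) (Cd C g)" using assms by (auto simp: hom_def)
  then show ?thesis using F_functor unfolding is_functor_def by blast
qed

abbreviation cmp where "cmp A B \<equiv> cmpr C D Fo Fa A B"
abbreviation cmp_inv where "cmp_inv A B \<equiv> inv_ar D (cmpr C D Fo Fa A B)"

context
  fixes A B assumes ob: "A \<in> Ob C" "B \<in> Ob C"
begin

lemma cmp_simps[simp]:
  "cmp A B \<in> Ar D" "Dm D (cmp A B) = Fo (Prd C A B)" "Cd D (cmp A B) = Prd D (Fo A) (Fo B)"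
  "Cmp D (Pr1 D (Fo A) (Fo B)) (cmp A B) = Fa (Pr1 C A B)"
  "Cmp D (Pr2 D (Fo A) (Fo B)) (cmp A B) = Fa (Pr2 C A B)"
  using ob by (simp_all add: cmpr_def)

lemma iso_cmp: "iso_ar D (cmp A B)"
  using F_preserves_products ob unfolding preserves_products_def by blast

lemma cmp_inv_simps[simp]:
  "cmp_inv A B \<in> Ar D" "Dm D (cmp_inv A B) = Prd D (Fo A) (Fo B)" "Cd D (cmp_inv A B) = Fo (Prd C A B)"
  "Cmp D (cmp A B) (cmp_inv A B) = Idt D (Prd D (Fo A) (Fo B))"
  "Cmp D (cmp_inv A B) (cmp A B) = Idt D (Fo (Prd C A B))"
  using d.iso_ar_inv[OF iso_cmp] by simp_all

lemma cmp_cmp_inv_Cmp[simp]: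
  "x \<in> Ar D \<Longrightarrow> Cd D x = Prd D (Fo A) (Fo B) \<Longrightarrow> Cmp D (cmp A B) (Cmp D (cmp_inv A B) x) = x"
  using ob by (subst d.Cmp_assoc[symmetric]) simp_all

lemma cmp_inv_cmp_Cmp[simp]:
  "x \<in> Ar D \<Longrightarrow> Cd D x = Fo (Prd C A B) \<Longrightarrow> Cmp D (cmp_inv A B) (Cmp D (cmp A B) x) = x"
  using ob by (subst d.Cmp_assoc[symmetric]) simp_all

lemma F_Pr_cmp_inv[simp]:
  "Cmp D (Fa (Pr1 C A B)) (cmp_inv A B) = Pr1 D (Fo A) (Fo B)"
  "Cmp D (Fa (Pr2 C A B)) (cmp_inv A B) = Pr2 D (Fo A) (Fo B)"
  using ob d.Cmp_assoc[of "cmp_inv A B" "cmp A B" "Pr1 D (Fo A) (Fo B)"]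
    d.Cmp_assoc[of "cmp_inv A B" "cmp A B" "Pr2 D (Fo A) (Fo B)"]
  by (simp_all del: d.Cmp_assoc)

lemma F_Pr_cmp_inv_Cmp[simp]:
  "x \<in> Ar D \<Longrightarrow> Cd D x = Prd D (Fo A) (Fo B) \<Longrightarrow>
    Cmp D (Fa (Pr1 C A B)) (Cmp D (cmp_inv A B) x) = Cmp D (Pr1 D (Fo A) (Fo B)) x"
  "x \<in> Ar D \<Longrightarrow> Cd D x = Prd D (Fo A) (Fo B) \<Longrightarrow>
    Cmp D (Fa (Pr2 C A B)) (Cmp D (cmp_inv A B) x) = Cmp D (Pr2 D (Fo A) (Fo B)) x"
  using ob by (subst d.Cmp_assoc[symmetric]; simp)+

lemma Pr_cmp_Cmp[simp]:
  "x \<in> Ar D \<Longrightarrow> Cd D x = Fo (Prd C A B) \<Longrightarrow>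
    Cmp D (Pr1 D (Fo A) (Fo B)) (Cmp D (cmp A B) x) = Cmp D (Fa (Pr1 C A B)) x"
  "x \<in> Ar D \<Longrightarrow> Cd D x = Fo (Prd C A B) \<Longrightarrow>
    Cmp D (Pr2 D (Fo A) (Fo B)) (Cmp D (cmp A B) x) = Cmp D (Fa (Pr2 C A B)) x"
  using ob by (subst d.Cmp_assoc[symmetric]; simp)+

lemma F_arrow_eqI:
  assumes "h \<in> Ar D" "k \<in> Ar D" "Cd D h = Fo (Prd C A B)" "Cd D k = Fo (Prd C A B)"
    "Cmp D (cmp A B) h = Cmp D (cmp A B) k"
  shows "h = k"
  using cmp_inv_cmp_Cmp[of h] cmp_inv_cmp_Cmp[of k] assms by metis

end

lemma F_pair[simp]:
  assumes "f \<in> Ar C" "g \<in> Ar C" "Dm C f = Dm C g"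
  shows "Fa (pair C f g) = Cmp D (cmp_inv (Cd C f) (Cd C g)) (pair D (Fa f) (Fa g))"
proof -
  let ?A = "Cd C f" and ?B = "Cd C g"
  have "Cmp D (cmp ?A ?B) (Fa (pair C f g)) = pair D (Fa f) (Fa g)"
  proof (rule d.Prd_arrow_eqI[of _ _ "Fo ?A" "Fo ?B"])
    show "Cmp D (Pr1 D (Fo ?A) (Fo ?B)) (Cmp D (cmp ?A ?B) (Fa (pair C f g))) =
      Cmp D (Pr1 D (Fo ?A) (Fo ?B)) (pair D (Fa f) (Fa g))"
      using assms by (simp del: F_Cmp add: F_Cmp[symmetric])
    show "Cmp D (Pr2 D (Fo ?A) (Fo ?B)) (Cmp D (cmp ?A ?B) (Fa (pair C f g))) =
      Cmp D (Pr2 D (Fo ?A) (Fo ?B)) (pair D (Fa f) (Fa g))"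
      using assms by (simp del: F_Cmp add: F_Cmp[symmetric])
  qed (use assms in simp_all)
  then show ?thesis using assms by (metis cmp_inv_cmp_Cmp c.Cd_Ob c.pair_Ar c.Cd_pair F_Ar Cd_F)
qed

abbreviation bx where "bx \<equiv> bex C P D R Fo Fa b"

lemma exle_bex:
  assumes A: "A \<in> Ob C" and B: "B \<in> Ob C" "B' \<in> Ob C"
    and \<alpha>: "\<alpha> \<in> Car P (Prd C A B)" "\<alpha>' \<in> Car P (Prd C A B')"
    and le: "exle C P A (B, \<alpha>) (B', \<alpha>')"
  shows "exle D R (Fo A) (Fo B, Rdx R (cmp_inv A B) (b (Prd C A B) \<alpha>))
    (Fo B', Rdx R (cmp_inv A B') (b (Prd C A B') \<alpha>'))"
proof -
  note ob[simp] = A B \<alpha>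
  obtain M where M: "M \<in> Ar C" "Dm C M = Prd C A B" "Cd C M = Prd C A B'"
    "Cmp C (Pr1 C A B') M = Pr1 C A B" "Leq P (Prd C A B) \<alpha> (Rdx P M \<alpha>')"
    using c.exleE[OF le A B] by blast
  have FM: "Cmp D (Fa (Pr1 C A B')) (Fa M) = Fa (Pr1 C A B)"
    using M by (simp del: F_Cmp add: F_Cmp[symmetric])
  have FMl: "Cmp D (Fa (Pr1 C A B')) (Cmp D (Fa M) x) = Cmp D (Fa (Pr1 C A B)) x"
    if "x \<in> Ar D" "Cd D x = Fo (Prd C A B)" for x
    by (rule d.Cmp_Cmp_eq[OF FM]) (simp_all add: M that)
  let ?M' = "Cmp D (cmp A B') (Cmp D (Fa M) (cmp_inv A B))"
  have "Leq R (Fo (Prd C A B)) (b (Prd C A B) \<alpha>) (b (Prd C A B) (Rdx P M \<alpha>'))"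
    by (rule b_mono) (use M in simp_all)
  also have "b (Prd C A B) (Rdx P M \<alpha>') = Rdx R (Fa M) (b (Prd C A B') \<alpha>')"
    using b_Rdx[of M \<alpha>'] M by simp
  finally have L: "Leq R (Fo (Prd C A B)) (b (Prd C A B) \<alpha>) (Rdx R (Fa M) (b (Prd C A B') \<alpha>'))" .
  have "Leq R (Dm D (cmp_inv A B)) (Rdx R (cmp_inv A B) (b (Prd C A B) \<alpha>))
      (Rdx R (cmp_inv A B) (Rdx R (Fa M) (b (Prd C A B') \<alpha>')))"
    by (rule d.Rdx_mono) (use M L in simp_all)
  then have "Leq R (Prd D (Fo A) (Fo B)) (Rdx R (cmp_inv A B) (b (Prd C A B) \<alpha>))
      (Rdx R ?M' (Rdx R (cmp_inv A B') (b (Prd C A B') \<alpha>')))"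
    using M by simp
  then show ?thesis by (rule d.exleI[rotated -1]) (simp_all add: M FMl)
qed

lemma bex_cls:
  assumes A: "A \<in> Ob C" and B: "B \<in> Ob C" and \<alpha>: "\<alpha> \<in> Car P (Prd C A B)"
  shows "bx A (c.cls A B \<alpha>) = d.cls (Fo A) (Fo B) (Rdx R (cmp_inv A B) (b (Prd C A B) \<alpha>))"
proof -
  have "ex_cls D R (Fo A) (Fo (fst p)) (Rdx R (cmp_inv A (fst p)) (b (Prd C A (fst p)) (snd p)))
      = d.cls (Fo A) (Fo B) (Rdx R (cmp_inv A B) (b (Prd C A B) \<alpha>))" if p: "p \<in> c.cls A B \<alpha>" for p
  proof -
    obtain B1 a1 where pp: "p = (B1, a1)" by (cases p)
    have p1: "B1 \<in> Ob C" "a1 \<in> Car P (Prd C A B1)" "exle C P A (B, \<alpha>) (B1, a1)" "exle C P A (B1, a1) (B, \<alpha>)"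
      using p unfolding pp c.cls_iff by auto
    show ?thesis unfolding pp fst_conv snd_conv
      by (rule d.cls_eqI) (simp_all add: A B \<alpha> p1 exle_bex)
  qed
  moreover have "(B, \<alpha>) \<in> c.cls A B \<alpha>" using c.cls_self A B \<alpha> by simp
  ultimately show ?thesis unfolding bex_def by auto
qed

lemma bex_Car:
  assumes A: "A \<in> Ob C" and s: "s \<in> Car (Pex C P) A"
  shows "bx A s \<in> Car (Pex D R) (Fo A)"
proof -
  obtain B \<alpha> where "B \<in> Ob C" "\<alpha> \<in> Car P (Prd C A B)" "s = c.cls A B \<alpha>" using s by (rule c.Car_PexE)
  then show ?thesis using A by (simp add: bex_cls)
qed

lemma bex_mono:
  assumes A: "A \<in> Ob C" and s: "s \<in> Car (Pex C P) A" and t: "t \<in> Car (Pex C P) A"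
    and le: "Leq (Pex C P) A s t"
  shows "Leq (Pex D R) (Fo A) (bx A s) (bx A t)"
proof -
  obtain B \<alpha> where b: "B \<in> Ob C" "\<alpha> \<in> Car P (Prd C A B)" "s = c.cls A B \<alpha>" using s by (rule c.Car_PexE)
  obtain B' \<alpha>' where b': "B' \<in> Ob C" "\<alpha>' \<in> Car P (Prd C A B')" "t = c.cls A B' \<alpha>'" using t by (rule c.Car_PexE)
  have "exle C P A (B, \<alpha>) (B', \<alpha>')"
    using le unfolding b(3) b'(3) by (rule c.Leq_Pex_clsD) (simp_all add: A b b')
  then have "exle D R (Fo A) (Fo B, Rdx R (cmp_inv A B) (b (Prd C A B) \<alpha>))
      (Fo B', Rdx R (cmp_inv A B') (b (Prd C A B') \<alpha>'))"
    by (rule exle_bex[OF A b(1) b'(1) b(2) b'(2)])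
  then show ?thesis unfolding b(3) b'(3) bex_cls[OF A b(1,2)] bex_cls[OF A b'(1,2)]
    by (rule d.Leq_Pex_clsI) (simp_all add: A b b')
qed

lemma bex_Rdx:
  assumes f: "f \<in> Ar C" and s: "s \<in> Car (Pex C P) (Cd C f)"
  shows "bx (Dm C f) (Rdx (Pex C P) f s) = Rdx (Pex D R) (Fa f) (bx (Cd C f) s)"
proof -
  let ?A = "Cd C f" and ?A' = "Dm C f"
  have A[simp]: "?A \<in> Ob C" "?A' \<in> Ob C" using f by auto
  note f[simp]
  obtain B \<alpha> where bb[simp]: "B \<in> Ob C" "\<alpha> \<in> Car P (Prd C ?A B)" and sc: "s = c.cls ?A B \<alpha>"
    using s by (rule c.Car_PexE)
  let ?fB = "times C f (Idt C B)"
  have "bx ?A' (Rdx (Pex C P) f s) = bx ?A' (c.cls ?A' B (Rdx P ?fB \<alpha>))"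
    unfolding sc by (subst c.Rdx_Pex_cls) simp_all
  also have "\<dots> = d.cls (Fo ?A') (Fo B) (Rdx R (cmp_inv ?A' B) (b (Prd C ?A' B) (Rdx P ?fB \<alpha>)))"
    by (rule bex_cls) simp_all
  also have "b (Prd C ?A' B) (Rdx P ?fB \<alpha>) = Rdx R (Fa ?fB) (b (Prd C ?A B) \<alpha>)"
    using b_Rdx[of ?fB \<alpha>] by (simp del: c.times_eq)
  also have "Rdx R (cmp_inv ?A' B) (Rdx R (Fa ?fB) (b (Prd C ?A B) \<alpha>)) =
      Rdx R (times D (Fa f) (Idt D (Fo B))) (Rdx R (cmp_inv ?A B) (b (Prd C ?A B) \<alpha>))"
  proof -
    have "Cmp D (Fa ?fB) (cmp_inv ?A' B) = Cmp D (cmp_inv ?A B) (times D (Fa f) (Idt D (Fo B)))"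
      by (rule F_arrow_eqI[of ?A B]) simp_all
    then show ?thesis by simp
  qed
  also have "d.cls (Fo ?A') (Fo B) \<dots> = Rdx (Pex D R) (Fa f) (bx ?A s)"
    unfolding sc bex_cls[OF A(1) bb] by (subst d.Rdx_Pex_cls) simp_all
  finally show ?thesis .
qed

lemma bex_SD_1cell: "SD_1cell C (Pex C P) D (Pex D R) Fo Fa bx"
  unfolding SD_1cell_def
  using F_functor F_preserves_products bex_Car bex_mono bex_Rdx by simp

lemma F_skolem_map:
  assumes ex: "weak_exponential C B C' E ev" and A: "A \<in> Ob C" and B: "B \<in> Ob C"
  shows "Cmp D (Fa (c.skolem_map A B E ev)) (Cmp D (cmp_inv (Prd C A E) B) (times D (cmp_inv A E) (Idt D (Fo B)))) =
    Cmp D (cmp_inv (Prd C A B) C') (Cmp D (times D (cmp_inv A B) (Idt D (Fo C')))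
      (d.skolem_map (Fo A) (Fo B) (Fo E) (Cmp D (Fa ev) (cmp_inv E B))))"
proof -
  note e[simp] = c.weak_exponentialD[OF ex] and ob[simp] = A B
  have C'[simp]: "C' \<in> Ob C" using c.Cd_Ob[OF e(2)] by simp
  show ?thesis
    by (rule F_arrow_eqI[of "Prd C A B" C']) (simp_all add: c.skolem_map_def d.skolem_map_def)
qed

end

locale ud_1cell = sd_1cell + c: universal_doctrine C P + d: universal_doctrine D R +
  assumes F_preserves_exponents: "preserves_exponents C D Fo Fa"
    and b_preserves_forall: "preserves_forall C P D R Fo Fa b"
begin

lemma b_forall_pr:
  "A \<in> Ob C \<Longrightarrow> B \<in> Ob C \<Longrightarrow> y \<in> Car P (Prd C A B) \<Longrightarrow>
    b A (c.forall_pr A B y) = d.forall_pr (Fo A) (Fo B) (Rdx R (cmp_inv A B) (b (Prd C A B) y))"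
  using b_preserves_forall c.is_forall_forall_pr d.is_forall_forall_pr unfolding preserves_forall_def by blast

lemma forall_val_bex:
  assumes u: "is_forall C (Pex C P) A B u" and A: "A \<in> Ob C" and B: "B \<in> Ob C"
    and y: "y \<in> Car (Pex C P) (Prd C A B)"
  shows "is_forall_val D (Pex D R) (Fo A) (Fo B) (Rdx (Pex D R) (cmp_inv A B) (bx (Prd C A B) y)) (bx A (u y))"
proof -
  obtain C' \<gamma> where c[simp]: "C' \<in> Ob C" "\<gamma> \<in> Car P (Prd C (Prd C A B) C')" and y: "y = c.cls (Prd C A B) C' \<gamma>"
    using y by (rule c.Car_PexE)
  obtain E ev where ex: "is_exponential C B C' E ev" using c.exponential_ex[OF B c(1)] .
  let ?ev = "Cmp D (Fa ev) (cmp_inv E B)"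
  have exC: "weak_exponential C B C' E ev" using ex by (rule c.is_exponential_weak)
  have exD: "weak_exponential D (Fo B) (Fo C') (Fo E) ?ev"
    using F_preserves_exponents ex B c(1) d.is_exponential_weak unfolding preserves_exponents_def by simp
  note e[simp] = c.weak_exponentialD[OF exC] and ob[simp] = A B
    and k[simp] = c.skolem_map_simps[OF exC A B] d.skolem_map_simps[OF exD F_Ob[OF A] F_Ob[OF B]]
  let ?k = "c.skolem_map A B E ev" and ?b\<gamma> = "b (Prd C (Prd C A B) C') \<gamma>"
  let ?\<rho> = "Rdx R (times D (cmp_inv A B) (Idt D (Fo C'))) (Rdx R (cmp_inv (Prd C A B) C') ?b\<gamma>)"
  have "u y = c.cls A E (c.forall_pr (Prd C A E) B (Rdx P ?k \<gamma>))"
    unfolding y by (rule slat_doctrine.is_forall_eq[OF c.slat_doctrine_Pex u c.Pex_forall_val[OF A B c exC]]) simp_all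
  then have "bx A (u y) = d.cls (Fo A) (Fo E) (Rdx R (cmp_inv A E)
      (d.forall_pr (Fo (Prd C A E)) (Fo B) (Rdx R (cmp_inv (Prd C A E) B) (Rdx R (Fa ?k) ?b\<gamma>))))"
    by (simp add: bex_cls b_forall_pr b_Rdx[of ?k, simplified] del: c.times_eq)
  also have "\<dots> = d.cls (Fo A) (Fo E) (d.forall_pr (Prd D (Fo A) (Fo E)) (Fo B)
      (Rdx R (times D (cmp_inv A E) (Idt D (Fo B))) (Rdx R (cmp_inv (Prd C A E) B) (Rdx R (Fa ?k) ?b\<gamma>))))"
    by (subst d.forall_pr_Rdx) simp_all
  also have "Rdx R (times D (cmp_inv A E) (Idt D (Fo B))) (Rdx R (cmp_inv (Prd C A E) B) (Rdx R (Fa ?k) ?b\<gamma>)) =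
      Rdx R (d.skolem_map (Fo A) (Fo B) (Fo E) ?ev) ?\<rho>"
    using F_skolem_map[OF exC A B] by simp
  finally have lhs: "bx A (u y) = d.cls (Fo A) (Fo E) (d.forall_pr (Prd D (Fo A) (Fo E)) (Fo B)
      (Rdx R (d.skolem_map (Fo A) (Fo B) (Fo E) ?ev) ?\<rho>))" .
  have rhs: "Rdx (Pex D R) (cmp_inv A B) (bx (Prd C A B) y) = d.cls (Prd D (Fo A) (Fo B)) (Fo C') ?\<rho>"
    unfolding y bex_cls[OF c.Prd_Ob[OF A B] c] by (subst d.Rdx_Pex_cls) simp_all
  show ?thesis unfolding lhs rhs
    by (rule d.Pex_forall_val[OF F_Ob[OF A] F_Ob[OF B] F_Ob[OF c(1)] _ exD]) simp
qed

lemma bex_preserves_forall: "preserves_forall C (Pex C P) D (Pex D R) Fo Fa bx"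
  unfolding preserves_forall_def
proof (intro allI impI ballI)
  interpret Pex_D: slat_doctrine D "Pex D R" by (rule d.slat_doctrine_Pex)
  fix uP uR A B y
  assume uP: "\<forall>A\<in>Ob C. \<forall>B\<in>Ob C. is_forall C (Pex C P) A B (uP A B)"
    and uR: "\<forall>A\<in>Ob D. \<forall>B\<in>Ob D. is_forall D (Pex D R) A B (uR A B)"
    and A: "A \<in> Ob C" and B: "B \<in> Ob C" and y: "y \<in> Car (Pex C P) (Prd C A B)"
  have "Rdx (Pex D R) (cmp_inv A B) (bx (Prd C A B) y) \<in> Car (Pex D R) (Prd D (Fo A) (Fo B))"
    using A B y by (simp add: bex_Car d.Pex_Rdx_Car)
  moreover have "is_forall D (Pex D R) (Fo A) (Fo B) (uR (Fo A) (Fo B))" using uR A B by simp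
  ultimately show "bx A (uP A B y) = uR (Fo A) (Fo B) (Rdx (Pex D R) (cmp_inv A B) (bx (Prd C A B) y))"
    using Pex_D.is_forall_eq[OF _ forall_val_bex[OF _ A B y]] uP A B by simp
qed

lemma bex_UDexp_1cell: "UDexp_1cell C (Pex C P) D (Pex D R) Fo Fa bx"
  using bex_SD_1cell F_preserves_exponents bex_preserves_forall
  by (simp add: UDexp_1cell_def SDexp_1cell_def)

end

lemma universal_doctrine_if_UDexp_obj: "UDexp_obj C P \<Longrightarrow> universal_doctrine C P"
  unfolding UDexp_obj_def SDexp_obj_def
  by (simp add: universal_doctrine_def universal_doctrine_axioms_def slat_doctrine_def
      slat_doctrine_axioms_def cartesian_category_def)

lemma ud_1cell_if_UDexp_1cell:
  "UDexp_obj C P \<Longrightarrow> UDexp_obj D R \<Longrightarrow> UDexp_1cell C P D R Fo Fa b \<Longrightarrow> ud_1cell C P D R Fo Fa b"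
  using universal_doctrine_if_UDexp_obj[of C P] universal_doctrine_if_UDexp_obj[of D R]
  unfolding UDexp_1cell_def SDexp_1cell_def
  by (simp add: ud_1cell_def ud_1cell_axioms_def sd_1cell_def sd_1cell_axioms_def universal_doctrine_def)

theorem theorem7:
  shows
  "(\<forall>(C :: ('o,'a) ccat) (P :: ('a,'o,'e) pdoc).
      UDexp_obj C P \<longrightarrow> UDexp_obj C (Pex C P))
   \<and> (\<forall>(C :: ('o,'a) ccat) (P :: ('a,'o,'e) pdoc) (D :: ('o2,'a2) ccat) (R :: ('a2,'o2,'e2) pdoc)
        (Fo :: 'o \<Rightarrow> 'o2) (Fa :: 'a \<Rightarrow> 'a2) (b :: 'o \<Rightarrow> 'e \<Rightarrow> 'e2).
      UDexp_obj C P \<longrightarrow> UDexp_obj D R \<longrightarrow> UDexp_1cell C P D R Fo Fa b \<longrightarrow>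
      UDexp_1cell C (Pex C P) D (Pex D R) Fo Fa (bex C P D R Fo Fa b))
   \<and> (\<forall>(C :: ('o,'a) ccat) (P :: ('a,'o,'e) pdoc).
      UDexp_obj C P \<longrightarrow>
        UDexp_1cell C P C (Pex C P) id id (eta C P) \<and>
        UDexp_1cell C (Pex C (Pex C P)) C (Pex C P) id id (mu C P))"
proof (intro conjI allI impI)
  fix C :: "('o,'a) ccat" and P :: "('a,'o,'e) pdoc"
  assume "UDexp_obj C P"
  then show "UDexp_obj C (Pex C P)"
    by (rule universal_doctrine.UDexp_obj_Pex[OF universal_doctrine_if_UDexp_obj])
next
  fix C :: "('o,'a) ccat" and P :: "('a,'o,'e) pdoc" and D :: "('o2,'a2) ccat" and R :: "('a2,'o2,'e2) pdoc"
    and Fo :: "'o \<Rightarrow> 'o2" and Fa :: "'a \<Rightarrow> 'a2" and b :: "'o \<Rightarrow> 'e \<Rightarrow> 'e2"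
  assume "UDexp_obj C P" "UDexp_obj D R" "UDexp_1cell C P D R Fo Fa b"
  then show "UDexp_1cell C (Pex C P) D (Pex D R) Fo Fa (bex C P D R Fo Fa b)"
    by (rule ud_1cell.bex_UDexp_1cell[OF ud_1cell_if_UDexp_1cell])
next
  fix C :: "('o,'a) ccat" and P :: "('a,'o,'e) pdoc"
  assume "UDexp_obj C P"
  then show "UDexp_1cell C P C (Pex C P) id id (eta C P)"
    by (rule universal_doctrine.eta_UDexp_1cell[OF universal_doctrine_if_UDexp_obj])
next
  fix C :: "('o,'a) ccat" and P :: "('a,'o,'e) pdoc"
  assume "UDexp_obj C P"
  then show "UDexp_1cell C (Pex C (Pex C P)) C (Pex C P) id id (mu C P)"
    by (rule universal_doctrine.mu_UDexp_1cell[OF universal_doctrine_if_UDexp_obj])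
qed

end
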